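(* Let $G$ be a discrete group, and let $I_0(G)^{\rm tw}$ denote the Banach $\ell^1(G)$-bimodule whose underlying space is $I_0(G)$, with left action induced by conjugation, $g\cdot a=e_g*a*e_{g^{-1}}$, and trivial right action $a\cdot g=a$ ($g\in G$). Then the maps $\Theta^n:C^n(\ell^1(G),I_0(G)')\to C^n(\ell^1(G),(I_0(G)^{\rm tw})')$ determined by $(\Theta^n\psi)(e_{g_1},\dots,e_{g_n})=(g_1\cdots g_n)^{-1}\cdot\psi(e_{g_1},\dots,e_{g_n})$ (the action on the right being the left action of $\ell^1(G)$ on the bimodule $I_0(G)'$) form a chain isomorphism of Banach cochain complexes, and hence $H^n(\ell^1(G),I_0(G)')\cong H^n(\ell^1(G),(I_0(G)^{\rm tw})')$ for all $n$. Moreover, with $S=G\setminus\{e\}$ regarded as a left $G$-set via conjugation, $I_0(G)^{\rm tw}\cong\ell^1(S)$ as $\ell^1(G)$-bimodules (with $\ell^1(S)$ carrying the left action induced by conjugation and trivial right action), so $H^n(\ell^1(G),I_0(G)')\cong H^n(\ell^1(G),\ell^1(S)')$ for all $n$.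
   Context: $\ell^1(G)$ is the convolution algebra of the discrete group $G$ with basis $(e_g)$; $I_0(G)$ is the kernel of the augmentation character $e_g\mapsto1$, a bimodule under multiplication. Bounded multilinear maps on $\ell^1(G)$ are determined by their values on basis elements. Hochschild cochains $C^n(A,M)$ are bounded $n$-linear maps $A^n\to M$ with the standard Hochschild coboundary; $M'$ has the adjoint bimodule structure. *)

theory Defs
  imports "HOL-Analysis.Analysis"
begin

text \<open>The discrete group G is a type of class group_add (written additively, NOT assumed
  commutative): group product g h is g + h, inverse is - g, unit is 0.\<close>

type_synonym 'g vec = "'g \<Rightarrow> complex"

definition l1 :: "('g vec) set" where
  "l1 = {f. (\<lambda>g. norm (f g)) summable_on UNIV}"

definition l1norm :: "'g vec \<Rightarrow> real" where
  "l1norm f = (\<Sum>\<^sub>\<infinity>g. norm (f g))"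

definition pt :: "'g \<Rightarrow> 'g vec" where
  "pt g = (\<lambda>x. if x = g then 1 else 0)"

definition conv :: "('g::group_add) vec \<Rightarrow> 'g vec \<Rightarrow> 'g vec" where
  "conv f h = (\<lambda>x. \<Sum>\<^sub>\<infinity>y. f y * h (- y + x))"

definition aug :: "'g vec \<Rightarrow> complex" where
  "aug f = (\<Sum>\<^sub>\<infinity>g. f g)"

definition vlin :: "complex \<Rightarrow> 'g vec \<Rightarrow> 'g vec \<Rightarrow> 'g vec" where
  "vlin c x y = (\<lambda>g. c * x g + y g)"

definition I0 :: "('g vec) set" where
  "I0 = {f \<in> l1. aug f = 0}"

text \<open>l1(S) for S = G - {e}, encoded as the l1 functions on G vanishing at e.\<close>
definition l1S_set :: "('g::group_add vec) set" where
  "l1S_set = {f \<in> l1. f 0 = 0}"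

text \<open>A Banach l1(G)-bimodule: a subspace of l1(G) (with the l1 norm) and the
  left action lact a x (a . x) and right action ract x a (x . a).\<close>
record 'g bimod =
  carr :: "'g vec set"
  lact :: "'g vec \<Rightarrow> 'g vec \<Rightarrow> 'g vec"
  ract :: "'g vec \<Rightarrow> 'g vec \<Rightarrow> 'g vec"

text \<open>Left action induced by conjugation: e_g . x = e_g * x * e_{g^{-1}}, i.e.
  (a . x)(h) = sum_g a(g) x(g^{-1} h g).\<close>
definition twl :: "('g::group_add) vec \<Rightarrow> 'g vec \<Rightarrow> 'g vec" where
  "twl a x = (\<lambda>h. \<Sum>\<^sub>\<infinity>g. a g * x (- g + h + g))"

text \<open>Trivial right action x . e_g = x, i.e. x . a = aug(a) x.\<close>
definition twr :: "'g vec \<Rightarrow> 'g vec \<Rightarrow> 'g vec" where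
  "twr x a = (\<lambda>h. aug a * x h)"

definition I0mod :: "('g::group_add) bimod" where
  "I0mod = \<lparr>carr = I0, lact = conv, ract = conv\<rparr>"

definition I0tw :: "('g::group_add) bimod" where
  "I0tw = \<lparr>carr = I0, lact = twl, ract = twr\<rparr>"

definition l1Smod :: "('g::group_add) bimod" where
  "l1Smod = \<lparr>carr = l1S_set, lact = twl, ract = twr\<rparr>"

text \<open>Dual space X': bounded linear functionals on X, normalised to vanish off X.\<close>
definition dualset :: "'g vec set \<Rightarrow> ('g vec \<Rightarrow> complex) set" where
  "dualset X = {ff.
     (\<forall>x\<in>X. \<forall>y\<in>X. \<forall>c. ff (vlin c x y) = c * ff x + ff y) \<and>
     (\<exists>K. \<forall>x\<in>X. norm (ff x) \<le> K * l1norm x) \<and>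
     (\<forall>x. x \<notin> X \<longrightarrow> ff x = 0)}"

definition dlact :: "'g bimod \<Rightarrow> 'g vec \<Rightarrow> ('g vec \<Rightarrow> complex) \<Rightarrow> ('g vec \<Rightarrow> complex)" where
  "dlact M a f = (\<lambda>x. if x \<in> carr M then f (ract M x a) else 0)"

definition dract :: "'g bimod \<Rightarrow> ('g vec \<Rightarrow> complex) \<Rightarrow> 'g vec \<Rightarrow> ('g vec \<Rightarrow> complex)" where
  "dract M f a = (\<lambda>x. if x \<in> carr M then f (lact M a x) else 0)"

text \<open>An n-cochain with values in M' is an n-linear map l1(G)^n -> M', given on
  lists of length n (and normalised to 0 on other arguments).\<close>
type_synonym 'g cochain = "'g vec list \<Rightarrow> 'g vec \<Rightarrow> complex"

definition valid :: "nat \<Rightarrow> 'g vec list \<Rightarrow> bool" where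
  "valid n as \<longleftrightarrow> length as = n \<and> set as \<subseteq> l1"

definition cbound :: "'g bimod \<Rightarrow> nat \<Rightarrow> 'g cochain \<Rightarrow> real \<Rightarrow> bool" where
  "cbound M n \<phi> K \<longleftrightarrow> (\<forall>as x. valid n as \<longrightarrow> x \<in> carr M \<longrightarrow>
      norm (\<phi> as x) \<le> K * prod_list (map l1norm as) * l1norm x)"

definition cochains :: "'g bimod \<Rightarrow> nat \<Rightarrow> 'g cochain set" where
  "cochains M n = {\<phi>.
     (\<forall>as. valid n as \<longrightarrow> \<phi> as \<in> dualset (carr M)) \<and>
     (\<forall>as. \<not> valid n as \<longrightarrow> \<phi> as = (\<lambda>_. 0)) \<and>
     (\<forall>as i a b c. valid n as \<longrightarrow> i < n \<longrightarrow> a \<in> l1 \<longrightarrow> b \<in> l1 \<longrightarrow>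
        \<phi> (as[i := vlin c a b]) = (\<lambda>x. c * \<phi> (as[i := a]) x + \<phi> (as[i := b]) x)) \<and>
     (\<exists>K. cbound M n \<phi> K)}"

text \<open>Replace a_i, a_{i+1} (1-based) by a_i * a_{i+1}.\<close>
definition merge :: "nat \<Rightarrow> ('g::group_add) vec list \<Rightarrow> 'g vec list" where
  "merge i as = take (i - 1) as @ [conv (as ! (i - 1)) (as ! i)] @ drop (i + 1) as"

definition cobound :: "('g::group_add) bimod \<Rightarrow> nat \<Rightarrow> 'g cochain \<Rightarrow> 'g cochain" where
  "cobound M n \<phi> = (\<lambda>as. if valid (Suc n) as then
      (\<lambda>x. dlact M (hd as) (\<phi> (tl as)) x
          + (\<Sum>i = 1..n. (-1) ^ i * \<phi> (merge i as) x)
          + (-1) ^ (Suc n) * dract M (\<phi> (butlast as)) (last as) x)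
     else (\<lambda>_. 0))"

definition czero :: "'g cochain" where
  "czero = (\<lambda>_ _. 0)"

definition clin :: "complex \<Rightarrow> 'g cochain \<Rightarrow> 'g cochain \<Rightarrow> 'g cochain" where
  "clin c \<phi> \<xi> = (\<lambda>as x. c * \<phi> as x + \<xi> as x)"

definition cocycles :: "('g::group_add) bimod \<Rightarrow> nat \<Rightarrow> 'g cochain set" where
  "cocycles M n = {\<phi> \<in> cochains M n. cobound M n \<phi> = czero}"

definition coboundaries :: "('g::group_add) bimod \<Rightarrow> nat \<Rightarrow> 'g cochain set" where
  "coboundaries M n = (case n of 0 \<Rightarrow> {czero} | Suc m \<Rightarrow> cobound M m ` cochains M m)"

definition cohom_rel :: "('g::group_add) bimod \<Rightarrow> nat \<Rightarrow> ('g cochain \<times> 'g cochain) set" where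
  "cohom_rel M n = {(\<phi>, \<xi>). \<phi> \<in> cocycles M n \<and> \<xi> \<in> cocycles M n \<and>
                      clin (-1) \<xi> \<phi> \<in> coboundaries M n}"

definition cohomology :: "('g::group_add) bimod \<Rightarrow> nat \<Rightarrow> 'g cochain set set" where
  "cohomology M n = cocycles M n // cohom_rel M n"

definition hlin :: "complex \<Rightarrow> 'g cochain set \<Rightarrow> 'g cochain set \<Rightarrow> 'g cochain set" where
  "hlin c P Q = {clin c p q | p q. p \<in> P \<and> q \<in> Q}"

definition cohom_iso :: "('g::group_add) bimod \<Rightarrow> 'g bimod \<Rightarrow> nat \<Rightarrow> bool" where
  "cohom_iso M N n \<longleftrightarrow> (\<exists>F. bij_betw F (cohomology M n) (cohomology N n) \<and>
      (\<forall>P\<in>cohomology M n. \<forall>Q\<in>cohomology M n. \<forall>c. F (hlin c P Q) = hlin c (F P) (F Q)))"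

definition bimod_iso :: "'g bimod \<Rightarrow> 'g bimod \<Rightarrow> bool" where
  "bimod_iso M N \<longleftrightarrow> (\<exists>U. bij_betw U (carr M) (carr N) \<and>
      (\<forall>x\<in>carr M. \<forall>y\<in>carr M. \<forall>c. U (vlin c x y) = vlin c (U x) (U y)) \<and>
      (\<exists>K. \<forall>x\<in>carr M. l1norm (U x) \<le> K * l1norm x) \<and>
      (\<exists>K. \<forall>x\<in>carr M. l1norm x \<le> K * l1norm (U x)) \<and>
      (\<forall>a\<in>l1. \<forall>x\<in>carr M. U (lact M a x) = lact N a (U x) \<and> U (ract M x a) = ract N (U x) a))"

end

theory Submission
  imports Defs
begin

(* For each n let Theta n twist an n-cochain by the inverse of the product of its
   group arguments: (Theta psi)(e_g1,...,e_gn)(x) = psi(e_g1,...,e_gn)(x * e_(g1...gn)^-1).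
   On general arguments Theta is built slot by slot: the operator twist_slot h k
   expands the k-th argument a = sum a(g) e_g and translates the test vector by h(g);
   composing these for all slots gives Theta (with h = uminus) and its inverse
   (with h = id).  Cochains are determined by their values on point masses
   (cochain_eq_on_points), which reduces all identities about Theta -- inverse
   laws, linearity, the chain-map identity with the Hochschild coboundary -- to
   identities between group elements.  The twisted isomorphism Theta and the
   bimodule isomorphism I_0(G)^tw ~ l1(G - {e}) (deleting the value at e) then give
   the theorem. *)

lemma l1_summable: "f \<in> l1 \<Longrightarrow> f summable_on UNIV"
  unfolding l1_def by (auto intro: abs_summable_summable)

lemma l1norm_nonneg: "l1norm f \<ge> 0"
  unfolding l1norm_def by (rule infsum_nonneg) auto

lemma prod_l1norm_nonneg: "0 \<le> prod_list (map l1norm as)"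
  by (rule prod_list_nonneg) (auto simp: l1norm_nonneg)

lemma norm_le_l1norm: assumes "f \<in> l1" shows "norm (f g) \<le> l1norm f"
proof -
  have "sum (\<lambda>g. norm (f g)) {g} \<le> (\<Sum>\<^sub>\<infinity>g. norm (f g))"
    using assms unfolding l1_def by (intro finite_sum_le_infsum) auto
  thus ?thesis by (simp add: l1norm_def)
qed

lemma vlin_l1: assumes "a \<in> l1" "b \<in> l1" shows "vlin c a b \<in> l1"
proof -
  have s: "(\<lambda>g. norm c * norm (a g) + norm (b g)) summable_on UNIV"
    using assms unfolding l1_def by (intro summable_on_add summable_on_cmult_right) auto
  show ?thesis unfolding l1_def vlin_def mem_Collect_eq
    by (rule summable_on_comparison_test[OF s]) (auto intro: order.trans[OF norm_triangle_ineq] simp: norm_mult)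
qed

lemma l1norm_vlin: assumes "a \<in> l1" "b \<in> l1" shows "l1norm (vlin c a b) \<le> norm c * l1norm a + l1norm b"
proof -
  have s: "(\<lambda>g. norm c * norm (a g) + norm (b g)) summable_on UNIV"
    using assms unfolding l1_def by (intro summable_on_add summable_on_cmult_right) auto
  have "l1norm (vlin c a b) \<le> (\<Sum>\<^sub>\<infinity>g. norm c * norm (a g) + norm (b g))"
    unfolding l1norm_def using vlin_l1[OF assms, of c] unfolding l1_def
    by (intro infsum_mono[OF _ s]) (auto intro: order.trans[OF norm_triangle_ineq] simp: norm_mult vlin_def)
  also have "\<dots> = norm c * l1norm a + l1norm b"
    using assms unfolding l1_def l1norm_def by (subst infsum_add) (auto intro: summable_on_cmult_right simp: infsum_cmult_right)
  finally show ?thesis .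
qed

lemma l1norm_scale: "l1norm (\<lambda>h. k * x h) = norm k * l1norm x"
  unfolding l1norm_def by (simp add: norm_mult infsum_cmult_right')

lemma scale_l1: "x \<in> l1 \<Longrightarrow> (\<lambda>h. k * x h) \<in> l1"
  unfolding l1_def by (simp add: norm_mult summable_on_cmult_right)

lemma infsum_lin:
  assumes "f summable_on UNIV" "g summable_on UNIV"
  shows "(\<Sum>\<^sub>\<infinity>y. c * f y + g y) = c * infsum f UNIV + (infsum g UNIV :: complex)"
proof -
  have "(\<Sum>\<^sub>\<infinity>y. c * f y + g y) = (\<Sum>\<^sub>\<infinity>y. c * f y) + infsum g UNIV"
    by (rule infsum_add[OF summable_on_cmult_right[OF assms(1)] assms(2)])
  thus ?thesis by (simp only: infsum_cmult_right')
qed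

lemma infsum_single: "(\<Sum>\<^sub>\<infinity>y. if y = a then f y else 0) = (f a :: 'b::{comm_monoid_add,t2_space})"
proof -
  have "(\<Sum>\<^sub>\<infinity>y. if y = a then f y else 0) = infsum (\<lambda>y. if y = a then f y else 0) {a}"
    by (rule infsum_cong_neutral) auto
  thus ?thesis by simp
qed

lemma pt_l1: "pt g \<in> l1"
proof -
  have "(\<lambda>x. norm (pt g x)) summable_on UNIV \<longleftrightarrow> (\<lambda>x. norm (pt g x)) summable_on {g}"
    by (rule summable_on_cong_neutral) (auto simp: pt_def)
  thus ?thesis unfolding l1_def by simp
qed

lemma l1norm_pt: "l1norm (pt g) = 1"
  unfolding l1norm_def pt_def
  by (subst infsum_cong[where g="\<lambda>y. if y = g then 1 else 0"]) (auto simp: infsum_single)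

lemma aug_pt: "aug (pt g) = 1"
  unfolding aug_def pt_def using infsum_single[of g "\<lambda>_. 1::complex"] by simp

lemma aug_vlin: assumes "a \<in> l1" "b \<in> l1" shows "aug (vlin c a b) = c * aug a + aug b"
  unfolding aug_def vlin_def using l1_summable[OF assms(1)] l1_summable[OF assms(2)]
  by (subst infsum_add) (auto intro: summable_on_cmult_right simp: infsum_cmult_right)

lemma norm_aug: assumes "a \<in> l1" shows "norm (aug a) \<le> l1norm a"
  using assms unfolding aug_def l1norm_def l1_def by (intro norm_infsum_bound) simp

lemma aug_scale: "a \<in> l1 \<Longrightarrow> aug (\<lambda>h. k * a h) = k * aug a"
  unfolding aug_def by (simp add: infsum_cmult_right')

lemma I0_l1: "x \<in> I0 \<Longrightarrow> x \<in> l1" unfolding I0_def by simp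
lemma I0_aug: "x \<in> I0 \<Longrightarrow> aug x = 0" unfolding I0_def by simp
lemma I0I: "x \<in> l1 \<Longrightarrow> aug x = 0 \<Longrightarrow> x \<in> I0" unfolding I0_def by simp
lemma I0_vlin: "x \<in> I0 \<Longrightarrow> y \<in> I0 \<Longrightarrow> vlin c x y \<in> I0"
  by (intro I0I vlin_l1) (auto simp: I0_l1 aug_vlin I0_aug)

lemma l1_reindex: assumes "bij_betw s UNIV UNIV" shows "(\<lambda>z. x (s z)) \<in> l1 \<longleftrightarrow> x \<in> l1"
  unfolding l1_def using summable_on_reindex_bij_betw[OF assms, of "\<lambda>z. norm (x z)"] by simp

lemma l1norm_reindex: assumes "bij_betw s UNIV UNIV" shows "l1norm (\<lambda>z. x (s z)) = l1norm x"
  unfolding l1norm_def using infsum_reindex_bij_betw[OF assms, of "\<lambda>z. norm (x z)"] by simp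

lemma aug_reindex: assumes "bij_betw s UNIV UNIV" shows "aug (\<lambda>z. x (s z)) = aug x"
  unfolding aug_def using infsum_reindex_bij_betw[OF assms, of x] by simp

lemma bij_radd: "bij_betw (\<lambda>z::'g::group_add. z + a) UNIV UNIV"
  by (rule bij_betwI[where g="\<lambda>z. z - a"]) (auto simp: algebra_simps)

lemma bij_ladd: "bij_betw (\<lambda>z::'g::group_add. a + z) UNIV UNIV"
  by (rule bij_betwI[where g="\<lambda>z. - a + z"]) (auto simp: add.assoc[symmetric])

lemma bij_conj: "bij_betw (\<lambda>z::'g::group_add. - a + z + a) UNIV UNIV"
  by (rule bij_betwI[where g="\<lambda>z. a + z + - a"]) (auto simp: add.assoc)

text \<open>Right translation x |-> x * e_h, which is how e_h acts on the right of I_0(G).\<close>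
definition rtrans :: "'g::group_add \<Rightarrow> 'g vec \<Rightarrow> 'g vec" where
  "rtrans h x = (\<lambda>z. x (z + - h))"

lemma rtrans_l1: "x \<in> l1 \<Longrightarrow> rtrans h x \<in> l1"
  unfolding rtrans_def using l1_reindex[OF bij_radd] by blast
lemma l1norm_rtrans: "l1norm (rtrans h x) = l1norm x"
  unfolding rtrans_def using l1norm_reindex[OF bij_radd] by blast
lemma aug_rtrans: "aug (rtrans h x) = aug x"
  unfolding rtrans_def using aug_reindex[OF bij_radd] by blast
lemma rtrans_I0: "x \<in> I0 \<Longrightarrow> rtrans h x \<in> I0"
  unfolding I0_def by (auto simp: rtrans_l1 aug_rtrans)
lemma rtrans_vlin: "rtrans h (vlin c x y) = vlin c (rtrans h x) (rtrans h y)"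
  unfolding rtrans_def vlin_def by simp
lemma rtrans_rtrans: "rtrans a (rtrans b x) = rtrans (b + a) x"
  unfolding rtrans_def by (simp only: minus_add add.assoc)
lemma rtrans_0: "rtrans 0 x = x"
  unfolding rtrans_def by simp

lemma left_solve: "(- y + z = (a::'g::group_add)) \<longleftrightarrow> (y = z + - a)"
proof
  assume "- y + z = a" hence "y + (- y + z) + - a = y + a + - a" by simp
  thus "y = z + - a" by (simp add: add.assoc[symmetric])
next
  assume "y = z + - a" thus "- y + z = a" by (simp add: minus_add add.assoc)
qed

lemma right_solve: "(z + - b = (a::'g::group_add)) \<longleftrightarrow> (z = a + b)"
proof
  assume "z + - b = a" hence "z + - b + b = a + b" by simp
  thus "z = a + b" by (simp add: add.assoc)
next
  assume "z = a + b" thus "z + - b = a" by (simp add: add.assoc)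
qed

lemma conv_pt_right: "conv x (pt a) = rtrans a x"
proof
  fix z
  have "conv x (pt a) z = (\<Sum>\<^sub>\<infinity>y. if y = z + - a then x y else 0)"
    unfolding conv_def pt_def by (rule infsum_cong) (simp add: left_solve)
  thus "conv x (pt a) z = rtrans a x z" by (simp add: infsum_single rtrans_def)
qed

lemma conv_pt_left: "conv (pt a) x = (\<lambda>z. x (- a + z))"
proof
  fix z
  have "conv (pt a) x z = (\<Sum>\<^sub>\<infinity>y. if y = a then x (- a + z) else 0)"
    unfolding conv_def pt_def by (rule infsum_cong) auto
  thus "conv (pt a) x z = x (- a + z)" by (simp add: infsum_single)
qed

lemma twl_pt: "twl (pt a) x = (\<lambda>z. x (- a + z + a))"
proof
  fix z
  have "twl (pt a) x z = (\<Sum>\<^sub>\<infinity>y. if y = a then x (- a + z + a) else 0)"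
    unfolding twl_def pt_def by (rule infsum_cong) auto
  thus "twl (pt a) x z = x (- a + z + a)" by (simp add: infsum_single)
qed

lemma twr_pt: "twr x (pt g) = x"
  unfolding twr_def by (simp add: aug_pt)

lemma conv_pt_pt: "conv (pt a) (pt b) = pt (a + b)"
proof -
  have "conv (pt a) (pt b) = rtrans b (pt a)" by (rule conv_pt_right)
  thus ?thesis unfolding rtrans_def pt_def fun_eq_iff by (simp only: right_solve) simp
qed

section \<open>Convolution-type products\<close>

text \<open>Both the convolution product and the conjugation action are products of the shape
  (a * b)(x) = sum_y a(y) b(sigma_y x) with every sigma_y a bijection of G.  Such a product
  maps l1 x l1 to l1, is bilinear, submultiplicative for the l1 norm and multiplicative
  for the augmentation; these facts are proved once, in a locale.\<close>

definition kprod :: "('g \<Rightarrow> 'g \<Rightarrow> 'g) \<Rightarrow> 'g vec \<Rightarrow> 'g vec \<Rightarrow> 'g vec" where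
  "kprod \<sigma> a b = (\<lambda>x. \<Sum>\<^sub>\<infinity>y. a y * b (\<sigma> y x))"

locale bij_kernel =
  fixes \<sigma> :: "'g \<Rightarrow> 'g \<Rightarrow> 'g"
  assumes bij: "\<And>y. bij_betw (\<sigma> y) UNIV UNIV"
begin

text \<open>Fubini-Tonelli input: the double series of |a(y) b(sigma_y x)| converges.\<close>
lemma abs_summable_yx:
  assumes a: "a \<in> l1" and b: "b \<in> l1"
  shows "(\<lambda>p. norm (a (fst p) * b (\<sigma> (fst p) (snd p)))) summable_on UNIV \<times> UNIV"
proof -
  have "(\<lambda>p. norm (a (fst p) * b (\<sigma> (fst p) (snd p)))) summable_on Sigma UNIV (\<lambda>_. UNIV)"
  proof (rule summable_on_SigmaI[where g="\<lambda>y. norm (a y) * l1norm b"])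
    fix y :: 'g
    have "((\<lambda>x. norm (b (\<sigma> y x))) has_sum l1norm b) UNIV"
    proof -
      have "(\<lambda>x. norm (b (\<sigma> y x))) summable_on UNIV"
        using summable_on_reindex_bij_betw[OF bij[of y], of "\<lambda>z. norm (b z)"] b unfolding l1_def by simp
      moreover have "(\<Sum>\<^sub>\<infinity>x. norm (b (\<sigma> y x))) = l1norm b"
        unfolding l1norm_def using infsum_reindex_bij_betw[OF bij[of y], of "\<lambda>z. norm (b z)"] by simp
      ultimately show ?thesis by (metis has_sum_infsum)
    qed
    from has_sum_cmult_right[OF this, of "norm (a y)"]
    show "((\<lambda>x. norm (a (fst (y, x)) * b (\<sigma> (fst (y, x)) (snd (y, x))))) has_sum norm (a y) * l1norm b) UNIV"
      by (simp add: norm_mult)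
  next
    show "(\<lambda>y. norm (a y) * l1norm b) summable_on UNIV"
      using a unfolding l1_def by (intro summable_on_cmult_left) simp
  qed simp
  thus ?thesis by simp
qed

lemma abs_summable_xy:
  assumes a: "a \<in> l1" and b: "b \<in> l1"
  shows "(\<lambda>(x,y). norm (a y * b (\<sigma> y x))) summable_on UNIV \<times> UNIV"
proof -
  have "(\<lambda>(x,y). (\<lambda>p. norm (a (fst p) * b (\<sigma> (fst p) (snd p)))) (y,x)) summable_on UNIV \<times> UNIV"
    by (rule iffD1[OF summable_on_swap abs_summable_yx[OF assms]])
  thus ?thesis by (simp only: fst_conv snd_conv)
qed

lemma row_abs_summable:
  assumes a: "a \<in> l1" and b: "b \<in> l1"
  shows "(\<lambda>y. norm (a y * b (\<sigma> y x))) summable_on UNIV"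
proof (rule summable_on_comparison_test)
  show "(\<lambda>y. norm (a y) * l1norm b) summable_on UNIV"
    using a unfolding l1_def by (intro summable_on_cmult_left) simp
  fix y show "norm (a y * b (\<sigma> y x)) \<le> norm (a y) * l1norm b"
    by (simp add: norm_mult mult_left_mono norm_le_l1norm[OF b])
qed simp

lemma row_summable:
  assumes a: "a \<in> l1" and b: "b \<in> l1"
  shows "(\<lambda>y. a y * b (\<sigma> y x)) summable_on UNIV"
  by (rule abs_summable_summable) (rule row_abs_summable[OF assms])

lemma kprod_le_row: assumes a: "a \<in> l1" and b: "b \<in> l1"
  shows "norm (kprod \<sigma> a b x) \<le> (\<Sum>\<^sub>\<infinity>y. norm (a y * b (\<sigma> y x)))"
  unfolding kprod_def by (rule norm_infsum_bound[OF row_abs_summable[OF assms]])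

lemma rows_summable: assumes a: "a \<in> l1" and b: "b \<in> l1"
  shows "(\<lambda>x. \<Sum>\<^sub>\<infinity>y. norm (a y * b (\<sigma> y x))) summable_on UNIV"
proof -
  have "(\<lambda>x. infsum (\<lambda>y. (\<lambda>(x,y). norm (a y * b (\<sigma> y x))) (x, y)) UNIV) summable_on UNIV"
    by (rule summable_on_SigmaD[OF abs_summable_xy[OF assms]]) (unfold case_prod_conv, rule row_abs_summable[OF assms])
  thus ?thesis by (unfold case_prod_conv)
qed

lemma kprod_l1: assumes a: "a \<in> l1" and b: "b \<in> l1" shows "kprod \<sigma> a b \<in> l1"
  unfolding l1_def mem_Collect_eq
  by (rule summable_on_comparison_test[OF rows_summable[OF assms]]) (rule kprod_le_row[OF assms], rule norm_ge_zero)

text \<open>Submultiplicativity, by summing the double series in the other order.\<close>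
lemma kprod_norm: assumes a: "a \<in> l1" and b: "b \<in> l1"
  shows "l1norm (kprod \<sigma> a b) \<le> l1norm a * l1norm b"
proof -
  have "l1norm (kprod \<sigma> a b) \<le> (\<Sum>\<^sub>\<infinity>x. \<Sum>\<^sub>\<infinity>y. norm (a y * b (\<sigma> y x)))"
    unfolding l1norm_def using kprod_l1[OF assms] unfolding l1_def
    by (intro infsum_mono rows_summable[OF assms] kprod_le_row[OF assms]) auto
  also have "\<dots> = (\<Sum>\<^sub>\<infinity>y. \<Sum>\<^sub>\<infinity>x. norm (a y * b (\<sigma> y x)))"
    using abs_summable_xy[OF assms] by (intro infsum_swap_banach) simp
  also have "\<dots> = (\<Sum>\<^sub>\<infinity>y. norm (a y) * l1norm b)"
  proof (rule infsum_cong)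
    fix y
    have "(\<Sum>\<^sub>\<infinity>x. norm (b (\<sigma> y x))) = l1norm b"
      unfolding l1norm_def using infsum_reindex_bij_betw[OF bij[of y], of "\<lambda>z. norm (b z)"] by simp
    thus "(\<Sum>\<^sub>\<infinity>x. norm (a y * b (\<sigma> y x))) = norm (a y) * l1norm b"
      by (simp add: norm_mult infsum_cmult_right')
  qed
  also have "\<dots> = l1norm a * l1norm b"
    unfolding l1norm_def by (simp add: infsum_cmult_left')
  finally show ?thesis .
qed

lemma kprod_aug: assumes a: "a \<in> l1" and b: "b \<in> l1"
  shows "aug (kprod \<sigma> a b) = aug a * aug b"
proof -
  have js: "(\<lambda>(x,y). a y * b (\<sigma> y x)) summable_on UNIV \<times> UNIV"
  proof (rule abs_summable_summable)
    show "(\<lambda>p. norm ((\<lambda>(x,y). a y * b (\<sigma> y x)) p)) summable_on UNIV \<times> UNIV"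
      by (rule summable_on_cong[THEN iffD1, OF _ abs_summable_xy[OF assms]]) auto
  qed
  have "aug (kprod \<sigma> a b) = (\<Sum>\<^sub>\<infinity>y. \<Sum>\<^sub>\<infinity>x. a y * b (\<sigma> y x))"
    unfolding aug_def kprod_def by (rule infsum_swap_banach[OF js])
  also have "\<dots> = (\<Sum>\<^sub>\<infinity>y. a y * aug b)"
  proof (rule infsum_cong)
    fix y
    have "(\<Sum>\<^sub>\<infinity>x. b (\<sigma> y x)) = aug b"
      unfolding aug_def using infsum_reindex_bij_betw[OF bij[of y], of b] by simp
    thus "(\<Sum>\<^sub>\<infinity>x. a y * b (\<sigma> y x)) = a y * aug b"
      by (simp add: infsum_cmult_right')
  qed
  also have "\<dots> = aug a * aug b"
    unfolding aug_def by (simp add: infsum_cmult_left')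
  finally show ?thesis .
qed

lemma kprod_lin1: assumes "a \<in> l1" "a' \<in> l1" "b \<in> l1"
  shows "kprod \<sigma> (vlin c a a') b = vlin c (kprod \<sigma> a b) (kprod \<sigma> a' b)"
proof
  fix x
  have "kprod \<sigma> (vlin c a a') b x = (\<Sum>\<^sub>\<infinity>y. c * (a y * b (\<sigma> y x)) + a' y * b (\<sigma> y x))"
    unfolding kprod_def vlin_def by (rule infsum_cong) (simp add: algebra_simps)
  also have "\<dots> = c * kprod \<sigma> a b x + kprod \<sigma> a' b x"
    unfolding kprod_def by (rule infsum_lin[OF row_summable[OF assms(1,3)] row_summable[OF assms(2,3)]])
  finally show "kprod \<sigma> (vlin c a a') b x = vlin c (kprod \<sigma> a b) (kprod \<sigma> a' b) x"
    by (simp add: vlin_def)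
qed

lemma kprod_lin2: assumes "a \<in> l1" "b \<in> l1" "b' \<in> l1"
  shows "kprod \<sigma> a (vlin c b b') = vlin c (kprod \<sigma> a b) (kprod \<sigma> a b')"
proof
  fix x
  have "kprod \<sigma> a (vlin c b b') x = (\<Sum>\<^sub>\<infinity>y. c * (a y * b (\<sigma> y x)) + a y * b' (\<sigma> y x))"
    unfolding kprod_def vlin_def by (rule infsum_cong) (simp add: algebra_simps)
  also have "\<dots> = c * kprod \<sigma> a b x + kprod \<sigma> a b' x"
    unfolding kprod_def by (rule infsum_lin[OF row_summable[OF assms(1,2)] row_summable[OF assms(1,3)]])
  finally show "kprod \<sigma> a (vlin c b b') x = vlin c (kprod \<sigma> a b) (kprod \<sigma> a b') x"
    by (simp add: vlin_def)
qed

end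

lemma conv_as_kprod: "conv a b = kprod (\<lambda>y x. - y + x) a b"
  unfolding conv_def kprod_def ..
lemma twl_as_kprod: "twl a b = kprod (\<lambda>y x. - y + x + y) a b"
  unfolding twl_def kprod_def ..

interpretation conv_as_kprodnel: bij_kernel "\<lambda>y x::'g::group_add. - y + x"
  by standard (rule bij_ladd)
interpretation twl_as_kprodnel: bij_kernel "\<lambda>y x::'g::group_add. - y + x + y"
  by standard (rule bij_conj)

lemma conv_l1: "a \<in> l1 \<Longrightarrow> b \<in> l1 \<Longrightarrow> conv a b \<in> l1"
  unfolding conv_as_kprod by (rule conv_as_kprodnel.kprod_l1)
lemma conv_norm: "a \<in> l1 \<Longrightarrow> b \<in> l1 \<Longrightarrow> l1norm (conv a b) \<le> l1norm a * l1norm b"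
  unfolding conv_as_kprod by (rule conv_as_kprodnel.kprod_norm)
lemma conv_aug: "a \<in> l1 \<Longrightarrow> b \<in> l1 \<Longrightarrow> aug (conv a b) = aug a * aug b"
  unfolding conv_as_kprod by (rule conv_as_kprodnel.kprod_aug)
lemma conv_lin1: "a \<in> l1 \<Longrightarrow> a' \<in> l1 \<Longrightarrow> b \<in> l1 \<Longrightarrow> conv (vlin c a a') b = vlin c (conv a b) (conv a' b)"
  unfolding conv_as_kprod by (rule conv_as_kprodnel.kprod_lin1)
lemma conv_lin2: "a \<in> l1 \<Longrightarrow> b \<in> l1 \<Longrightarrow> b' \<in> l1 \<Longrightarrow> conv a (vlin c b b') = vlin c (conv a b) (conv a b')"
  unfolding conv_as_kprod by (rule conv_as_kprodnel.kprod_lin2)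
lemma twl_l1: "a \<in> l1 \<Longrightarrow> b \<in> l1 \<Longrightarrow> twl a b \<in> l1"
  unfolding twl_as_kprod by (rule twl_as_kprodnel.kprod_l1)
lemma twl_norm: "a \<in> l1 \<Longrightarrow> b \<in> l1 \<Longrightarrow> l1norm (twl a b) \<le> l1norm a * l1norm b"
  unfolding twl_as_kprod by (rule twl_as_kprodnel.kprod_norm)
lemma twl_aug: "a \<in> l1 \<Longrightarrow> b \<in> l1 \<Longrightarrow> aug (twl a b) = aug a * aug b"
  unfolding twl_as_kprod by (rule twl_as_kprodnel.kprod_aug)
lemma twl_lin1: "a \<in> l1 \<Longrightarrow> a' \<in> l1 \<Longrightarrow> b \<in> l1 \<Longrightarrow> twl (vlin c a a') b = vlin c (twl a b) (twl a' b)"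
  unfolding twl_as_kprod by (rule twl_as_kprodnel.kprod_lin1)
lemma twl_lin2: "a \<in> l1 \<Longrightarrow> b \<in> l1 \<Longrightarrow> b' \<in> l1 \<Longrightarrow> twl a (vlin c b b') = vlin c (twl a b) (twl a b')"
  unfolding twl_as_kprod by (rule twl_as_kprodnel.kprod_lin2)
section \<open>Bounded multilinear maps are determined by their values on point masses\<close>

definition res :: "'g set \<Rightarrow> 'g vec \<Rightarrow> 'g vec" where
  "res F a = (\<lambda>g. if g \<in> F then a g else 0)"

text \<open>A finitely supported vector is a finite linear combination of point masses, so a
  linear functional on l1 killing all point masses kills it.\<close>
lemma res_finite_in_span:
  assumes "finite F"
  shows "res F a \<in> l1 \<and> (\<forall>f. (\<forall>x\<in>l1. \<forall>y\<in>l1. \<forall>c. f (vlin c x y) = c * f x + f y) \<longrightarrow>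
           (\<forall>g. f (pt g) = 0) \<longrightarrow> f (res F a) = 0)"
  using assms
proof (induction F rule: finite_induct)
  case empty
  have "res {} a = vlin (-1) (pt undefined) (pt undefined)"
    unfolding res_def vlin_def by simp
  thus ?case by (auto intro: vlin_l1 pt_l1 simp: pt_l1)
next
  case (insert g F)
  have "res (insert g F) a = vlin (a g) (pt g) (res F a)"
    unfolding res_def vlin_def pt_def using insert(2) by auto
  thus ?case using insert(3) by (auto intro: vlin_l1 pt_l1 simp: pt_l1)
qed

text \<open>Density of finitely supported vectors: a bounded linear functional on l1 that
  vanishes on all point masses vanishes identically.\<close>
lemma bounded_functional_zero:
  assumes lin: "\<forall>x\<in>l1. \<forall>y\<in>l1. \<forall>c. f (vlin c x y) = c * f x + f y"
    and bnd: "\<forall>x\<in>l1. norm (f x) \<le> K * l1norm x"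
    and pt0: "\<forall>g. f (pt g) = 0"
    and a: "a \<in> l1"
  shows "f a = 0"
proof -
  have sa: "(\<lambda>g. norm (a g)) summable_on UNIV" using a unfolding l1_def by simp
  have small: "norm (f a) \<le> e" if e: "e > 0" for e
  proof -
    define d where "d = e / (max K 0 + 1)"
    have d: "d > 0" unfolding d_def using e by (simp add: add_pos_nonneg)
    obtain F where F: "finite F" "dist (sum (\<lambda>g. norm (a g)) F) (l1norm a) \<le> d"
      using infsum_finite_approximation[OF sa d] unfolding l1norm_def by auto
    have rF: "res F a \<in> l1" "f (res F a) = 0" using res_finite_in_span[OF F(1), of a] lin pt0 by auto
    define r where "r = res (- F) a"
    have ar: "a = vlin 1 (res F a) r" unfolding r_def res_def vlin_def by auto
    have "r = vlin (-1) (res F a) a" unfolding r_def res_def vlin_def by auto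
    hence rl: "r \<in> l1" using vlin_l1[OF rF(1) a] by simp
    have fa: "f a = f r" using lin rF rl ar by (metis mult_1 add_0)
    have s1: "(\<lambda>g. norm (a g)) summable_on F" "(\<lambda>g. norm (a g)) summable_on (-F)"
      using a unfolding l1_def by (auto intro: summable_on_subset_banach)
    have "l1norm a = infsum (\<lambda>g. norm (a g)) (F \<union> -F)" unfolding l1norm_def by simp
    also have "\<dots> = infsum (\<lambda>g. norm (a g)) F + infsum (\<lambda>g. norm (a g)) (-F)"
      by (rule infsum_Un_disjoint[OF s1]) auto
    also have "infsum (\<lambda>g. norm (a g)) (-F) = l1norm r"
      unfolding l1norm_def r_def res_def by (rule infsum_cong_neutral) auto
    finally have "l1norm r \<le> d" using F by (simp add: dist_real_def)
    have "norm (f a) \<le> K * l1norm r" using bnd rl fa by simp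
    also have "\<dots> \<le> (max K 0 + 1) * l1norm r" by (simp add: mult_right_mono l1norm_nonneg)
    also have "\<dots> \<le> (max K 0 + 1) * d" using \<open>l1norm r \<le> d\<close> by (simp add: mult_left_mono)
    also have "\<dots> = e" unfolding d_def by (simp add: add_pos_nonneg)
    finally show ?thesis .
  qed
  have "norm (f a) \<le> 0" by (rule field_le_epsilon) (simp add: small)
  thus ?thesis by simp
qed

definition bounded_multilinear :: "nat \<Rightarrow> ('g vec list \<Rightarrow> complex) \<Rightarrow> bool" where
  "bounded_multilinear n F \<longleftrightarrow> (\<forall>as i a b c. valid n as \<longrightarrow> i < n \<longrightarrow> a \<in> l1 \<longrightarrow> b \<in> l1 \<longrightarrow>
        F (as[i := vlin c a b]) = c * F (as[i := a]) + F (as[i := b])) \<and>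
     (\<exists>K. \<forall>as. valid n as \<longrightarrow> norm (F as) \<le> K * prod_list (map l1norm as))"

lemma prod_upd: fixes f :: "'a \<Rightarrow> real" shows "k < length xs \<Longrightarrow>
  prod_list (map f (xs[k := v])) = f v * (prod_list (map f (take k xs)) * prod_list (map f (drop (Suc k) xs)))"
  by (simp add: upd_conv_take_nth_drop algebra_simps)

lemma valid_upd: "valid n as \<Longrightarrow> a \<in> l1 \<Longrightarrow> valid n (as[i := a])"
  unfolding valid_def using set_update_subset_insert by fastforce

lemma valid_nth: "valid n as \<Longrightarrow> i < n \<Longrightarrow> as ! i \<in> l1"
  unfolding valid_def by auto

lemma valid_map_pt: "length gs = n \<Longrightarrow> valid n (map pt gs)"
  unfolding valid_def by (auto simp: pt_l1)

text \<open>Induction step of the density argument: if F vanishes whenever the slots p, ..., n-1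
  are point masses, it vanishes whenever the slots p+1, ..., n-1 are, because in slot p it
  is a bounded linear functional vanishing on point masses.\<close>
lemma bounded_multilinear_zero_step:
  fixes F :: "'g vec list \<Rightarrow> complex"
  assumes m: "bounded_multilinear n F" and p: "p < n"
    and IH: "\<And>bs. valid n bs \<Longrightarrow> \<forall>j. p \<le> j \<longrightarrow> j < n \<longrightarrow> (\<exists>g. bs ! j = pt g) \<Longrightarrow> F bs = 0"
    and va: "valid n as" and hp: "\<forall>j. Suc p \<le> j \<longrightarrow> j < n \<longrightarrow> (\<exists>g. as ! j = pt g)"
  shows "F as = 0"
proof -
  have lin: "\<And>as i a b c. valid n as \<Longrightarrow> i < n \<Longrightarrow> a \<in> l1 \<Longrightarrow> b \<in> l1 \<Longrightarrow>
        F (as[i := vlin c a b]) = c * F (as[i := a]) + F (as[i := b])"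
    using m unfolding bounded_multilinear_def by blast
  obtain K where K: "\<And>as. valid n as \<Longrightarrow> norm (F as) \<le> K * prod_list (map l1norm as)"
    using m unfolding bounded_multilinear_def by blast
  have len: "length as = n" using va unfolding valid_def by simp
  define C where "C = K * (prod_list (map l1norm (take p as)) * prod_list (map l1norm (drop (Suc p) as)))"
  have bnd: "norm (F (as[p := x])) \<le> C * l1norm x" if x: "x \<in> l1" for x
  proof -
    have "norm (F (as[p := x])) \<le> K * prod_list (map l1norm (as[p := x]))"
      by (rule K[OF valid_upd[OF va x]])
    also have "\<dots> = C * l1norm x" unfolding C_def
      using prod_upd[of p as l1norm x] len p by (simp only: mult_ac)
    finally show ?thesis .
  qed
  have pts: "F (as[p := pt g]) = 0" for g
  proof (rule IH)
    show "valid n (as[p := pt g])" by (rule valid_upd[OF va pt_l1])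
    show "\<forall>j. p \<le> j \<longrightarrow> j < n \<longrightarrow> (\<exists>g'. as[p := pt g] ! j = pt g')"
    proof (intro allI impI)
      fix j assume "p \<le> j" "j < n"
      thus "\<exists>g'. as[p := pt g] ! j = pt g'"
        using hp len p by (cases "j = p") auto
    qed
  qed
  have "F (as[p := as ! p]) = 0"
  proof (rule bounded_functional_zero[where f="\<lambda>a. F (as[p := a])" and K=C])
    show "\<forall>x\<in>l1. \<forall>y\<in>l1. \<forall>c. F (as[p := vlin c x y]) = c * F (as[p := x]) + F (as[p := y])"
      using lin[OF va p] by blast
  qed (use bnd pts valid_nth[OF va p] in blast)+
  thus ?thesis by simp
qed

lemma all_pt:
  assumes "\<forall>j<n. \<exists>g. as ! j = pt g" "length as = n"
  shows "\<exists>gs. length gs = n \<and> as = map pt gs"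
proof -
  obtain G where G: "\<forall>j<n. as ! j = pt (G j)" using assms(1) by metis
  show ?thesis using G assms(2) by (intro exI[of _ "map G [0..<n]"]) (auto intro: nth_equalityI)
qed

text \<open>A bounded multilinear map vanishing on all tuples of point masses is zero: replace
  the arguments by point masses one slot at a time, from the last slot to the first.\<close>
lemma bounded_multilinear_zero_on_points:
  fixes F :: "'g vec list \<Rightarrow> complex"
  assumes m: "bounded_multilinear n F" and z: "\<forall>gs. length gs = n \<longrightarrow> F (map pt gs) = 0"
    and v: "valid n as"
  shows "F as = 0"
proof -
  have "\<forall>bs. valid n bs \<longrightarrow> (\<forall>j. k \<le> j \<longrightarrow> j < n \<longrightarrow> (\<exists>g. bs ! j = pt g)) \<longrightarrow> F bs = 0"
    if "k \<le> n" for k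
    using that
  proof (induction k)
    case 0
    show ?case
    proof (intro allI impI)
      fix bs :: "'g vec list"
      assume vb: "valid n bs" and h: "\<forall>j. 0 \<le> j \<longrightarrow> j < n \<longrightarrow> (\<exists>g. bs ! j = pt g)"
      have "\<forall>j<n. \<exists>g. bs ! j = pt g" using h by blast
      moreover have "length bs = n" using vb unfolding valid_def by blast
      ultimately obtain gs where "length gs = n" "bs = map pt gs" using all_pt by blast
      thus "F bs = 0" using z by simp
    qed
  next
    case (Suc p)
    show ?case
    proof (intro allI impI)
      fix bs :: "'g vec list"
      assume vb: "valid n bs" and hb: "\<forall>j. Suc p \<le> j \<longrightarrow> j < n \<longrightarrow> (\<exists>g. bs ! j = pt g)"
      have pn: "p < n" using Suc.prems by simp
      show "F bs = 0"
      proof (rule bounded_multilinear_zero_step[OF m pn _ vb hb])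
        fix cs :: "'g vec list" assume "valid n cs" "\<forall>j. p \<le> j \<longrightarrow> j < n \<longrightarrow> (\<exists>g. cs ! j = pt g)"
        thus "F cs = 0" using Suc.IH Suc.prems by simp
      qed
    qed
  qed
  from this[of n] show ?thesis using v by simp
qed

lemma cochain_dual: "\<phi> \<in> cochains M n \<Longrightarrow> valid n as \<Longrightarrow> \<phi> as \<in> dualset (carr M)"
  unfolding cochains_def by blast
lemma cochain_invalid: "\<phi> \<in> cochains M n \<Longrightarrow> \<not> valid n as \<Longrightarrow> \<phi> as = (\<lambda>_. 0)"
  unfolding cochains_def by blast
lemma cochain_multilinear: "\<phi> \<in> cochains M n \<Longrightarrow> valid n as \<Longrightarrow> i < n \<Longrightarrow> a \<in> l1 \<Longrightarrow> b \<in> l1 \<Longrightarrow>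
   \<phi> (as[i := vlin c a b]) = (\<lambda>x. c * \<phi> (as[i := a]) x + \<phi> (as[i := b]) x)"
  unfolding cochains_def by blast
lemma cochain_bounded: "\<phi> \<in> cochains M n \<Longrightarrow> \<exists>K. cbound M n \<phi> K"
  unfolding cochains_def by blast

lemma cochainI:
  fixes \<phi> :: "'g cochain" and M :: "'g bimod"
  assumes "\<And>as. valid n as \<Longrightarrow> \<phi> as \<in> dualset (carr M)"
    "\<And>as. \<not> valid n as \<Longrightarrow> \<phi> as = (\<lambda>_. 0)"
    "\<And>as i (a::'g vec) (b::'g vec) c. valid n as \<Longrightarrow> i < n \<Longrightarrow> a \<in> l1 \<Longrightarrow> b \<in> l1 \<Longrightarrow>
        \<phi> (as[i := vlin c a b]) = (\<lambda>x. c * \<phi> (as[i := a]) x + \<phi> (as[i := b]) x)"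
    "cbound M n \<phi> K"
  shows "\<phi> \<in> cochains M n"
  unfolding cochains_def using assms by blast

lemma dual_zero: "f \<in> dualset X \<Longrightarrow> x \<notin> X \<Longrightarrow> f x = 0"
  unfolding dualset_def by blast
lemma dual_linear: "f \<in> dualset X \<Longrightarrow> x \<in> X \<Longrightarrow> y \<in> X \<Longrightarrow> f (vlin c x y) = c * f x + f y"
  unfolding dualset_def by blast
lemma dualI:
  assumes "\<And>x y c. x \<in> X \<Longrightarrow> y \<in> X \<Longrightarrow> f (vlin c x y) = c * f x + f y"
    "\<And>x. x \<in> X \<Longrightarrow> norm (f x) \<le> K * l1norm x" "\<And>x. x \<notin> X \<Longrightarrow> f x = 0"
  shows "f \<in> dualset X"
  unfolding dualset_def using assms by blast

lemma cochain_zero_off: "\<phi> \<in> cochains M n \<Longrightarrow> x \<notin> carr M \<Longrightarrow> \<phi> as x = 0"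
  by (cases "valid n as") (auto dest: cochain_invalid cochain_dual dual_zero)

lemma cboundD: "cbound M n \<phi> K \<Longrightarrow> valid n as \<Longrightarrow> x \<in> carr M \<Longrightarrow>
   norm (\<phi> as x) \<le> K * prod_list (map l1norm as) * l1norm x"
  unfolding cbound_def by blast

lemma cbound_mono:
  fixes M :: "'g bimod"
  assumes c: "cbound M n \<phi> K" and k: "K \<le> K'"
  shows "cbound M n \<phi> K'"
  unfolding cbound_def
proof (intro allI impI)
  fix as :: "'g vec list" and x assume "valid n as" "x \<in> carr M"
  hence "norm (\<phi> as x) \<le> K * prod_list (map l1norm as) * l1norm x" by (rule cboundD[OF c])
  also have "\<dots> \<le> K' * prod_list (map l1norm as) * l1norm x"
    using k by (simp add: mult.assoc mult_right_mono prod_l1norm_nonneg l1norm_nonneg)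
  finally show "norm (\<phi> as x) \<le> K' * prod_list (map l1norm as) * l1norm x" .
qed

lemma cochain_bounded_nonneg: "\<phi> \<in> cochains M n \<Longrightarrow> \<exists>K\<ge>0. cbound M n \<phi> K"
  using cochain_bounded cbound_mono by (metis max.cobounded1 max.cobounded2)

text \<open>Uniqueness: two cochains agreeing on all tuples of point masses are equal, since at
  each fixed test vector their difference is a bounded multilinear map.\<close>
lemma cochain_eq_on_points:
  fixes M :: "'g bimod"
  assumes p: "\<phi> \<in> cochains M n" and q: "\<psi> \<in> cochains M n"
    and e: "\<forall>gs. length gs = n \<longrightarrow> \<phi> (map pt gs) = \<psi> (map pt gs)"
  shows "\<phi> = \<psi>"
proof (intro ext)
  fix as :: "'g vec list" and x
  show "\<phi> as x = \<psi> as x"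
  proof (cases "valid n as \<and> x \<in> carr M")
    case False thus ?thesis using cochain_invalid[OF p] cochain_invalid[OF q]
        cochain_zero_off[OF p] cochain_zero_off[OF q] by auto
  next
    case True
    hence va: "valid n as" and x: "x \<in> carr M" by auto
    define F where "F = (\<lambda>bs. \<phi> bs x - \<psi> bs x)"
    obtain K1 K2 where K: "cbound M n \<phi> K1" "cbound M n \<psi> K2" using cochain_bounded p q by metis
    have "bounded_multilinear n F" unfolding bounded_multilinear_def
    proof (intro conjI allI impI exI)
      fix bs :: "'g vec list" and i and a b :: "'g vec" and c assume "valid n bs" "i < n" "a \<in> l1" "b \<in> l1"
      thus "F (bs[i := vlin c a b]) = c * F (bs[i := a]) + F (bs[i := b])"
        unfolding F_def using cochain_multilinear[OF p] cochain_multilinear[OF q] by (simp add: algebra_simps)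
    next
      fix bs :: "'g vec list" assume v: "valid n bs"
      have "norm (F bs) \<le> norm (\<phi> bs x) + norm (\<psi> bs x)" unfolding F_def by (rule norm_triangle_ineq4)
      also have "\<dots> \<le> K1 * prod_list (map l1norm bs) * l1norm x + K2 * prod_list (map l1norm bs) * l1norm x"
        using cboundD[OF K(1) v x] cboundD[OF K(2) v x] by simp
      finally show "norm (F bs) \<le> ((K1 + K2) * l1norm x) * prod_list (map l1norm bs)"
        by (simp add: algebra_simps)
    qed
    moreover have "\<forall>gs. length gs = n \<longrightarrow> F (map pt gs) = 0" unfolding F_def using e by simp
    ultimately have "F as = 0" using bounded_multilinear_zero_on_points va by blast
    thus ?thesis unfolding F_def by simp
  qed
qed

lemma czero_cochain: "czero \<in> cochains M n"
  by (rule cochainI[where K=0]) (auto simp: czero_def dualset_def cbound_def intro: exI[of _ 0])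

lemma clin_cochain:
  fixes \<phi> :: "'g cochain" and M :: "'g bimod"
  assumes p: "\<phi> \<in> cochains M n" and q: "\<psi> \<in> cochains M n"
  shows "clin c \<phi> \<psi> \<in> cochains M n"
proof -
  obtain K1 K2 where K: "cbound M n \<phi> K1" "cbound M n \<psi> K2"
    using cochain_bounded p q by metis
  have bnd: "cbound M n (clin c \<phi> \<psi>) (norm c * K1 + K2)" unfolding cbound_def
  proof (intro allI impI)
    fix as :: "'g vec list" and x assume v: "valid n as" and x: "x \<in> carr M"
    have "norm (clin c \<phi> \<psi> as x) \<le> norm c * norm (\<phi> as x) + norm (\<psi> as x)"
      unfolding clin_def by (metis norm_mult norm_triangle_ineq)
    also have "\<dots> \<le> norm c * (K1 * prod_list (map l1norm as) * l1norm x) + K2 * prod_list (map l1norm as) * l1norm x"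
      using cboundD[OF K(1) v x] cboundD[OF K(2) v x] by (intro add_mono mult_left_mono) auto
    finally show "norm (clin c \<phi> \<psi> as x) \<le> (norm c * K1 + K2) * prod_list (map l1norm as) * l1norm x"
      by (simp add: algebra_simps)
  qed
  show ?thesis
  proof (rule cochainI[OF _ _ _ bnd])
    fix as :: "'g vec list" assume v: "valid n as"
    show "clin c \<phi> \<psi> as \<in> dualset (carr M)"
    proof (rule dualI[where K="(norm c * K1 + K2) * prod_list (map l1norm as)"])
      fix x y c' assume "x \<in> carr M" "y \<in> carr M"
      thus "clin c \<phi> \<psi> as (vlin c' x y) = c' * clin c \<phi> \<psi> as x + clin c \<phi> \<psi> as y"
        unfolding clin_def using dual_linear[OF cochain_dual[OF p v]] dual_linear[OF cochain_dual[OF q v]]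
        by (simp add: algebra_simps)
    qed (use cboundD[OF bnd v] cochain_zero_off[OF p] cochain_zero_off[OF q] in \<open>auto simp: clin_def\<close>)
  next
    fix as :: "'g vec list" and i and a b :: "'g vec" and c' assume "valid n as" "i < n" "a \<in> l1" "b \<in> l1"
    thus "clin c \<phi> \<psi> (as[i := vlin c' a b]) = (\<lambda>x. c' * clin c \<phi> \<psi> (as[i := a]) x + clin c \<phi> \<psi> (as[i := b]) x)"
      unfolding clin_def using cochain_multilinear[OF p] cochain_multilinear[OF q] by (simp add: algebra_simps)
  qed (auto simp: clin_def cochain_invalid[OF p] cochain_invalid[OF q])
qed

lemma clin_czero: "clin c czero czero = czero"
  unfolding clin_def czero_def by simp

section \<open>Chain isomorphisms induce isomorphisms in cohomology\<close>

lemma cocycles_cochains: "cocycles M n \<subseteq> cochains M n"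
  unfolding cocycles_def by auto

lemma cohom_rel_cocycles: "cohom_rel M n `` {\<phi>} \<subseteq> cocycles M n"
  unfolding cohom_rel_def by auto

lemma cohomology_cochains: "X \<in> cohomology M n \<Longrightarrow> X \<subseteq> cochains M n"
  unfolding cohomology_def by (auto elim!: quotientE simp: cohom_rel_def cocycles_def)

locale cochain_iso =
  fixes M N :: "('g::group_add) bimod" and \<Theta> :: "nat \<Rightarrow> 'g cochain \<Rightarrow> 'g cochain"
  assumes bij: "bij_betw (\<Theta> n) (cochains M n) (cochains N n)"
    and lin: "\<psi> \<in> cochains M n \<Longrightarrow> \<xi> \<in> cochains M n \<Longrightarrow>
                 \<Theta> n (clin c \<psi> \<xi>) = clin c (\<Theta> n \<psi>) (\<Theta> n \<xi>)"
    and chain: "\<psi> \<in> cochains M n \<Longrightarrow> cobound N n (\<Theta> n \<psi>) = \<Theta> (Suc n) (cobound M n \<psi>)"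
    and closed: "\<psi> \<in> cochains M n \<Longrightarrow> cobound M n \<psi> \<in> cochains M (Suc n)"
begin

lemma inj: "inj_on (\<Theta> n) (cochains M n)"
  using bij unfolding bij_betw_def by auto

lemma image: "\<Theta> n ` cochains M n = cochains N n"
  using bij unfolding bij_betw_def by auto

lemma mem: "\<psi> \<in> cochains M n \<Longrightarrow> \<Theta> n \<psi> \<in> cochains N n"
  using image by blast

lemma zero: "\<Theta> n czero = czero"
proof -
  have "\<Theta> n czero = \<Theta> n (clin (-1) czero czero)" by (simp add: clin_czero)
  also have "\<dots> = clin (-1) (\<Theta> n czero) (\<Theta> n czero)" by (rule lin) (auto intro: czero_cochain)
  finally have e: "\<Theta> n czero = clin (-1) (\<Theta> n czero) (\<Theta> n czero)" .
  show ?thesis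
  proof (intro ext)
    fix as x
    have "\<Theta> n czero as x = clin (-1) (\<Theta> n czero) (\<Theta> n czero) as x" using e by simp
    thus "\<Theta> n czero as x = czero as x" unfolding clin_def czero_def by simp
  qed
qed

lemma cocycle_iff: "\<psi> \<in> cochains M n \<Longrightarrow> \<psi> \<in> cocycles M n \<longleftrightarrow> \<Theta> n \<psi> \<in> cocycles N n"
proof -
  assume p: "\<psi> \<in> cochains M n"
  have "cobound M n \<psi> = czero \<longleftrightarrow> \<Theta> (Suc n) (cobound M n \<psi>) = \<Theta> (Suc n) czero"
    using inj_onD[OF inj _ closed[OF p] czero_cochain] by auto
  thus ?thesis unfolding cocycles_def using p mem[OF p] chain[OF p] zero by auto
qed

lemma coboundary_iff: "\<phi> \<in> cochains M n \<Longrightarrow> \<phi> \<in> coboundaries M n \<longleftrightarrow> \<Theta> n \<phi> \<in> coboundaries N n"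
proof (cases n)
  case 0
  assume x: "\<phi> \<in> cochains M n"
  have "\<phi> = czero \<longleftrightarrow> \<Theta> n \<phi> = \<Theta> n czero" using inj_onD[OF inj _ x czero_cochain] by auto
  thus ?thesis unfolding coboundaries_def 0 using zero by simp
next
  case (Suc m)
  assume x: "\<phi> \<in> cochains M n"
  show ?thesis
  proof
    assume "\<phi> \<in> coboundaries M n"
    then obtain \<eta> where e: "\<eta> \<in> cochains M m" "\<phi> = cobound M m \<eta>" unfolding coboundaries_def Suc by auto
    have "\<Theta> n \<phi> = cobound N m (\<Theta> m \<eta>)" unfolding e Suc using chain[OF e(1)] by simp
    thus "\<Theta> n \<phi> \<in> coboundaries N n" unfolding coboundaries_def Suc using mem[OF e(1)] by auto
  next
    assume "\<Theta> n \<phi> \<in> coboundaries N n"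
    then obtain \<eta>' where e: "\<eta>' \<in> cochains N m" "\<Theta> n \<phi> = cobound N m \<eta>'" unfolding coboundaries_def Suc by auto
    obtain \<eta> where h: "\<eta> \<in> cochains M m" "\<eta>' = \<Theta> m \<eta>" using e(1) image by blast
    have "\<Theta> (Suc m) \<phi> = \<Theta> (Suc m) (cobound M m \<eta>)" using e(2) chain[OF h(1)] h(2) Suc by simp
    hence "\<phi> = cobound M m \<eta>" using inj_onD[OF inj _ x[unfolded Suc] closed[OF h(1)]] by simp
    thus "\<phi> \<in> coboundaries M n" unfolding coboundaries_def Suc using h(1) by auto
  qed
qed

lemma cohom_rel_iff:
  assumes p: "\<phi> \<in> cochains M n" and q: "\<xi> \<in> cochains M n"
  shows "(\<phi>, \<xi>) \<in> cohom_rel M n \<longleftrightarrow> (\<Theta> n \<phi>, \<Theta> n \<xi>) \<in> cohom_rel N n"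
proof -
  have "clin (-1) \<xi> \<phi> \<in> coboundaries M n \<longleftrightarrow> clin (-1) (\<Theta> n \<xi>) (\<Theta> n \<phi>) \<in> coboundaries N n"
    using coboundary_iff[OF clin_cochain[OF q p]] lin[OF q p] by simp
  thus ?thesis unfolding cohom_rel_def using cocycle_iff[OF p] cocycle_iff[OF q] by auto
qed

lemma cocycles_image: "\<Theta> n ` cocycles M n = cocycles N n"
proof
  show "\<Theta> n ` cocycles M n \<subseteq> cocycles N n" using cocycle_iff cocycles_cochains by blast
  show "cocycles N n \<subseteq> \<Theta> n ` cocycles M n"
  proof
    fix \<phi>' assume a: "\<phi>' \<in> cocycles N n"
    then obtain \<phi> where "\<phi> \<in> cochains M n" "\<phi>' = \<Theta> n \<phi>" using image cocycles_cochains by blast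
    thus "\<phi>' \<in> \<Theta> n ` cocycles M n" using cocycle_iff a by blast
  qed
qed

lemma class_image:
  assumes p: "\<phi> \<in> cocycles M n"
  shows "\<Theta> n ` (cohom_rel M n `` {\<phi>}) = cohom_rel N n `` {\<Theta> n \<phi>}"
proof
  have pc: "\<phi> \<in> cochains M n" using p cocycles_cochains by blast
  show "\<Theta> n ` (cohom_rel M n `` {\<phi>}) \<subseteq> cohom_rel N n `` {\<Theta> n \<phi>}"
  proof
    fix y assume "y \<in> \<Theta> n ` (cohom_rel M n `` {\<phi>})"
    then obtain \<xi> where "(\<phi>, \<xi>) \<in> cohom_rel M n" "y = \<Theta> n \<xi>" by auto
    moreover have "\<xi> \<in> cochains M n" using calculation cohom_rel_cocycles cocycles_cochains by blast
    ultimately show "y \<in> cohom_rel N n `` {\<Theta> n \<phi>}" using cohom_rel_iff[OF pc] by auto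
  qed
  show "cohom_rel N n `` {\<Theta> n \<phi>} \<subseteq> \<Theta> n ` (cohom_rel M n `` {\<phi>})"
  proof
    fix \<eta> assume e: "\<eta> \<in> cohom_rel N n `` {\<Theta> n \<phi>}"
    hence "\<eta> \<in> cochains N n" using cohom_rel_cocycles cocycles_cochains by blast
    then obtain \<xi> where x: "\<xi> \<in> cochains M n" "\<eta> = \<Theta> n \<xi>" using image by blast
    hence "(\<phi>, \<xi>) \<in> cohom_rel M n" using cohom_rel_iff[OF pc x(1)] e by auto
    thus "\<eta> \<in> \<Theta> n ` (cohom_rel M n `` {\<phi>})" using x by auto
  qed
qed

lemma cohomology_bij: "bij_betw (\<lambda>P. \<Theta> n ` P) (cohomology M n) (cohomology N n)"
  unfolding bij_betw_def
proof
  show "inj_on (\<lambda>P. \<Theta> n ` P) (cohomology M n)"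
  proof (rule inj_onI)
    fix P Q assume "P \<in> cohomology M n" "Q \<in> cohomology M n" "\<Theta> n ` P = \<Theta> n ` Q"
    thus "P = Q" using inj_on_image_eq_iff[OF inj] cohomology_cochains by metis
  qed
  show "(\<lambda>P. \<Theta> n ` P) ` cohomology M n = cohomology N n"
  proof (intro equalityI subsetI)
    fix X assume "X \<in> (\<lambda>P. \<Theta> n ` P) ` cohomology M n"
    then obtain \<phi> where p: "\<phi> \<in> cocycles M n" "X = \<Theta> n ` (cohom_rel M n `` {\<phi>})"
      unfolding cohomology_def by (auto elim!: quotientE)
    moreover have "\<Theta> n \<phi> \<in> cocycles N n" using p cocycles_image by blast
    ultimately show "X \<in> cohomology N n" unfolding cohomology_def class_image[OF p(1)] by (auto intro: quotientI)
  next
    fix X assume "X \<in> cohomology N n"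
    then obtain \<phi>' where p: "\<phi>' \<in> cocycles N n" "X = cohom_rel N n `` {\<phi>'}"
      unfolding cohomology_def by (auto elim!: quotientE)
    then obtain \<phi> where q: "\<phi> \<in> cocycles M n" "\<phi>' = \<Theta> n \<phi>" using cocycles_image by blast
    hence "X = \<Theta> n ` (cohom_rel M n `` {\<phi>})" using p class_image by simp
    thus "X \<in> (\<lambda>P. \<Theta> n ` P) ` cohomology M n" using q unfolding cohomology_def by (auto intro: quotientI)
  qed
qed

lemma cohomology_linear:
  assumes P: "P \<in> cohomology M n" and Q: "Q \<in> cohomology M n"
  shows "\<Theta> n ` hlin c P Q = hlin c (\<Theta> n ` P) (\<Theta> n ` Q)"
proof -
  have L: "\<Theta> n (clin c p q) = clin c (\<Theta> n p) (\<Theta> n q)" if "p \<in> P" "q \<in> Q" for p q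
    using that P Q by (intro lin) (auto dest: cohomology_cochains)
  show ?thesis
  proof (intro equalityI subsetI)
    fix y assume "y \<in> \<Theta> n ` hlin c P Q"
    then obtain p q where "p \<in> P" "q \<in> Q" "y = \<Theta> n (clin c p q)" unfolding hlin_def by auto
    thus "y \<in> hlin c (\<Theta> n ` P) (\<Theta> n ` Q)" unfolding hlin_def using L by blast
  next
    fix y assume "y \<in> hlin c (\<Theta> n ` P) (\<Theta> n ` Q)"
    then obtain p q where pq: "p \<in> P" "q \<in> Q" "y = clin c (\<Theta> n p) (\<Theta> n q)" unfolding hlin_def by auto
    hence "y = \<Theta> n (clin c p q)" using L by simp
    thus "y \<in> \<Theta> n ` hlin c P Q" unfolding hlin_def using pq by blast
  qed
qed

theorem cohom_iso: "cohom_iso M N n"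
  unfolding cohom_iso_def using cohomology_bij cohomology_linear by blast

end

lemma cohom_iso_trans:
  assumes "cohom_iso A B n" "cohom_iso B C n" shows "cohom_iso A C n"
proof -
  obtain F where F: "bij_betw F (cohomology A n) (cohomology B n)"
    "\<forall>P\<in>cohomology A n. \<forall>Q\<in>cohomology A n. \<forall>c. F (hlin c P Q) = hlin c (F P) (F Q)"
    using assms(1) unfolding cohom_iso_def by blast
  obtain G where G: "bij_betw G (cohomology B n) (cohomology C n)"
    "\<forall>P\<in>cohomology B n. \<forall>Q\<in>cohomology B n. \<forall>c. G (hlin c P Q) = hlin c (G P) (G Q)"
    using assms(2) unfolding cohom_iso_def by blast
  have "bij_betw (G \<circ> F) (cohomology A n) (cohomology C n)" using F(1) G(1) by (rule bij_betw_trans)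
  moreover have "\<forall>P\<in>cohomology A n. \<forall>Q\<in>cohomology A n. \<forall>c. (G \<circ> F) (hlin c P Q) = hlin c ((G \<circ> F) P) ((G \<circ> F) Q)"
    using F G bij_betwE[OF F(1)] by simp
  ultimately show ?thesis unfolding cohom_iso_def by blast
qed

lemma valid_tl: "valid (Suc n) as \<Longrightarrow> valid n (tl as)"
  unfolding valid_def by (cases as) auto
lemma valid_butlast: "valid (Suc n) as \<Longrightarrow> valid n (butlast as)"
  unfolding valid_def by (auto dest: in_set_butlastD)
lemma valid_hd: "valid (Suc n) as \<Longrightarrow> hd as \<in> l1"
  unfolding valid_def by (cases as) auto
lemma valid_last: "valid (Suc n) as \<Longrightarrow> last as \<in> l1"
  unfolding valid_def by (cases as rule: rev_cases) auto

lemma prod_hd: "as \<noteq> [] \<Longrightarrow> prod_list (map f as) = f (hd as) * prod_list (map f (tl as))"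
  by (cases as) auto
lemma prod_last: "as \<noteq> [] \<Longrightarrow> prod_list (map f as) = prod_list (map f (butlast as)) * (f (last as) :: real)"
  by (cases as rule: rev_cases) auto

lemma hd_upd: "as \<noteq> [] \<Longrightarrow> hd (as[i := v]) = (if i = 0 then v else hd as)"
  by (cases as; cases i) auto
lemma tl_upd: "tl (as[i := v]) = (if i = 0 then tl as else (tl as)[i - 1 := v])"
  by (cases as; cases i) auto

lemma length_merge: "1 \<le> j \<Longrightarrow> j < length as \<Longrightarrow> length (merge j as) = length as - 1"
  unfolding merge_def by simp

lemma merge_nth: assumes "1 \<le> j" "j < length as" "k < length as - 1"
  shows "merge j as ! k = (if k < j - 1 then as ! k else if k = j - 1 then conv (as ! (j - 1)) (as ! j) else as ! Suc k)"
  using assms unfolding merge_def by (auto simp: nth_append min_def)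

lemma valid_merge: assumes "valid (Suc n) as" "1 \<le> j" "j \<le> n" shows "valid n (merge j as)"
proof -
  have l: "length as = Suc n" using assms unfolding valid_def by simp
  have "\<forall>k<n. merge j as ! k \<in> l1"
    using assms l by (auto simp: merge_nth valid_nth intro!: conv_l1)
  thus ?thesis unfolding valid_def using length_merge[of j as] l assms by (auto simp: in_set_conv_nth)
qed

lemma split_at_pair: "1 \<le> j \<Longrightarrow> j < length as \<Longrightarrow> as = take (j - 1) as @ as ! (j - 1) # as ! j # drop (j + 1) as"
proof -
  assume a: "1 \<le> j" "j < length as"
  have d1: "drop (j - 1) as = as ! (j - 1) # drop j as"
    using Cons_nth_drop_Suc[of "j - 1" as] a by simp
  have d2: "drop j as = as ! j # drop (j + 1) as"
    using Cons_nth_drop_Suc[of j as] a by simp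
  have "as = take (j - 1) as @ drop (j - 1) as" by simp
  thus ?thesis unfolding d1 d2 .
qed

lemma prod_merge: assumes "valid (Suc n) as" "1 \<le> j" "j \<le> n"
  shows "prod_list (map l1norm (merge j as)) \<le> prod_list (map l1norm as)"
proof -
  have l: "j < length as" using assms unfolding valid_def by simp
  have a: "as ! (j - 1) \<in> l1" "as ! j \<in> l1" using assms l by (auto simp: valid_nth)
  let ?A = "prod_list (map l1norm (take (j - 1) as))" and ?B = "prod_list (map l1norm (drop (j + 1) as))"
  have "prod_list (map l1norm (merge j as)) = ?A * l1norm (conv (as ! (j - 1)) (as ! j)) * ?B"
    unfolding merge_def by simp
  also have "\<dots> \<le> ?A * (l1norm (as ! (j - 1)) * l1norm (as ! j)) * ?B"
    by (intro mult_right_mono mult_left_mono conv_norm a prod_l1norm_nonneg)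
  also have "\<dots> = prod_list (map l1norm as)"
    by (subst (3) split_at_pair[OF assms(2) l]) (simp add: mult_ac)
  finally show ?thesis .
qed

lemma merge_upd1: assumes "1 \<le> j" "j < length as" "i < j - 1"
  shows "merge j (as[i := u]) = (merge j as)[i := u]"
  using assms by (intro nth_equalityI) (auto simp: length_merge merge_nth nth_list_update)
lemma merge_upd2: assumes "1 \<le> j" "j < length as"
  shows "merge j (as[j - 1 := u]) = (merge j as)[j - 1 := conv u (as ! j)]"
  using assms by (intro nth_equalityI) (auto simp: length_merge merge_nth nth_list_update)
lemma merge_upd3: assumes "1 \<le> j" "j < length as"
  shows "merge j (as[j := u]) = (merge j as)[j - 1 := conv (as ! (j - 1)) u]"
  using assms by (intro nth_equalityI) (auto simp: length_merge merge_nth nth_list_update)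
lemma merge_upd4: assumes "1 \<le> j" "j < i" "i < length as"
  shows "merge j (as[i := u]) = (merge j as)[i - 1 := u]"
  using assms by (intro nth_equalityI) (auto simp: length_merge merge_nth nth_list_update)

section \<open>Banach bimodules and the Hochschild coboundary\<close>

locale banach_bimod =
  fixes M :: "('g::group_add) bimod"
  assumes vlin_closed: "x \<in> carr M \<Longrightarrow> y \<in> carr M \<Longrightarrow> vlin c x y \<in> carr M"
    and lact_closed: "a \<in> l1 \<Longrightarrow> x \<in> carr M \<Longrightarrow> lact M a x \<in> carr M"
    and ract_closed: "a \<in> l1 \<Longrightarrow> x \<in> carr M \<Longrightarrow> ract M x a \<in> carr M"
    and lact_norm: "a \<in> l1 \<Longrightarrow> x \<in> carr M \<Longrightarrow> l1norm (lact M a x) \<le> l1norm a * l1norm x"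
    and ract_norm: "a \<in> l1 \<Longrightarrow> x \<in> carr M \<Longrightarrow> l1norm (ract M x a) \<le> l1norm a * l1norm x"
    and lact_lin_left: "a \<in> l1 \<Longrightarrow> b \<in> l1 \<Longrightarrow> x \<in> carr M \<Longrightarrow>
        lact M (vlin c a b) x = vlin c (lact M a x) (lact M b x)"
    and ract_lin_right: "a \<in> l1 \<Longrightarrow> b \<in> l1 \<Longrightarrow> x \<in> carr M \<Longrightarrow>
        ract M x (vlin c a b) = vlin c (ract M x a) (ract M x b)"
    and lact_lin_right: "a \<in> l1 \<Longrightarrow> x \<in> carr M \<Longrightarrow> y \<in> carr M \<Longrightarrow>
        lact M a (vlin c x y) = vlin c (lact M a x) (lact M a y)"
    and ract_lin_left: "a \<in> l1 \<Longrightarrow> x \<in> carr M \<Longrightarrow> y \<in> carr M \<Longrightarrow>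
        ract M (vlin c x y) a = vlin c (ract M x a) (ract M y a)"

definition valid_part :: "nat \<Rightarrow> 'g cochain \<Rightarrow> 'g cochain" where
  "valid_part m T = (\<lambda>as. if valid m as then T as else (\<lambda>_. 0))"

text \<open>An expression T in the arguments is a cochain term if cutting it down to argument
  lists of length m gives an m-cochain.  The coboundary is a sum of such terms.\<close>
definition cochain_term :: "'g bimod \<Rightarrow> nat \<Rightarrow> 'g cochain \<Rightarrow> bool" where
  "cochain_term M m T \<longleftrightarrow> valid_part m T \<in> cochains M m"

lemma cochain_termI:
  fixes T :: "'g cochain"
  assumes lin: "\<And>as x y c. valid m as \<Longrightarrow> x \<in> carr M \<Longrightarrow> y \<in> carr M \<Longrightarrow> T as (vlin c x y) = c * T as x + T as y"
    and zero: "\<And>as x. valid m as \<Longrightarrow> x \<notin> carr M \<Longrightarrow> T as x = 0"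
    and bnd: "\<And>as x. valid m as \<Longrightarrow> x \<in> carr M \<Longrightarrow> norm (T as x) \<le> K * prod_list (map l1norm as) * l1norm x"
    and mult: "\<And>as i (a::'g vec) b c x. valid m as \<Longrightarrow> i < m \<Longrightarrow> a \<in> l1 \<Longrightarrow> b \<in> l1 \<Longrightarrow>
      T (as[i := vlin c a b]) x = c * T (as[i := a]) x + T (as[i := b]) x"
  shows "cochain_term M m T"
  unfolding cochain_term_def
proof (rule cochainI[where K=K])
  fix as :: "'g vec list" assume v: "valid m as"
  show "valid_part m T as \<in> dualset (carr M)"
    unfolding valid_part_def using v lin zero bnd
    by (intro dualI[where K="K * prod_list (map l1norm as)"]) auto
next
  fix as :: "'g vec list" and i and a b :: "'g vec" and c
  assume "valid m as" "i < m" "a \<in> l1" "b \<in> l1"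
  thus "valid_part m T (as[i := vlin c a b]) = (\<lambda>x. c * valid_part m T (as[i := a]) x + valid_part m T (as[i := b]) x)"
    unfolding valid_part_def using mult by (simp add: valid_upd vlin_l1 fun_eq_iff)
next
  show "cbound M m (valid_part m T) K"
    unfolding cbound_def valid_part_def using bnd by auto
qed (simp add: valid_part_def)

lemma cochain_term_clin:
  assumes "cochain_term M m T" "cochain_term M m U"
  shows "cochain_term M m (clin c T U)"
proof -
  have "valid_part m (clin c T U) = clin c (valid_part m T) (valid_part m U)"
    unfolding valid_part_def clin_def by (simp add: fun_eq_iff)
  thus ?thesis using assms unfolding cochain_term_def by (simp add: clin_cochain)
qed

lemma cochain_term_add:
  "cochain_term M m T \<Longrightarrow> cochain_term M m U \<Longrightarrow> cochain_term M m (\<lambda>as x. T as x + U as x)"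
  using cochain_term_clin[of M m T U 1] by (simp add: clin_def)

lemma cochain_term_czero: "cochain_term M m czero"
proof -
  have e: "valid_part m czero = czero" unfolding valid_part_def czero_def by auto
  show ?thesis unfolding cochain_term_def e by (rule czero_cochain)
qed

lemma cochain_term_scale: "cochain_term M m T \<Longrightarrow> cochain_term M m (\<lambda>as x. d * T as x)"
  using cochain_term_clin[OF _ cochain_term_czero, of M m T d] by (simp add: clin_def czero_def)

lemma cochain_term_sum:
  fixes T :: "nat \<Rightarrow> 'g cochain"
  assumes "finite J" "\<And>j. j \<in> J \<Longrightarrow> cochain_term M m (T j)"
  shows "cochain_term M m (\<lambda>as x. \<Sum>j\<in>J. T j as x)"
  using assms
proof (induction J rule: finite_induct)
  case empty
  thus ?case using cochain_term_czero by (simp add: czero_def)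
next
  case (insert j J)
  thus ?case using cochain_term_add[of M m "T j" "\<lambda>as x. \<Sum>j\<in>J. T j as x"] by simp
qed

text \<open>Merged-argument terms of the coboundary; these do not involve the module actions.\<close>
lemma cochain_term_merge:
  fixes \<phi> :: "('g::group_add) cochain"
  assumes p: "\<phi> \<in> cochains M n" and j: "1 \<le> j" "j \<le> n"
  shows "cochain_term M (Suc n) (\<lambda>as x. \<phi> (merge j as) x)"
proof -
  obtain K where K: "cbound M n \<phi> K" "K \<ge> 0" using cochain_bounded_nonneg[OF p] by blast
  show ?thesis
  proof (rule cochain_termI[where K=K])
    fix as :: "'g vec list" and x y c assume v: "valid (Suc n) as" and x: "x \<in> carr M" and y: "y \<in> carr M"
    show "\<phi> (merge j as) (vlin c x y) = c * \<phi> (merge j as) x + \<phi> (merge j as) y"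
      by (rule dual_linear[OF cochain_dual[OF p valid_merge[OF v j]] x y])
  next
    fix as :: "'g vec list" and x assume v: "valid (Suc n) as" and "x \<notin> carr M"
    thus "\<phi> (merge j as) x = 0" using dual_zero[OF cochain_dual[OF p valid_merge[OF v j]]] by simp
  next
    fix as :: "'g vec list" and x assume v: "valid (Suc n) as" and x: "x \<in> carr M"
    have "norm (\<phi> (merge j as) x) \<le> K * prod_list (map l1norm (merge j as)) * l1norm x"
      by (rule cboundD[OF K(1) valid_merge[OF v j] x])
    also have "\<dots> \<le> K * prod_list (map l1norm as) * l1norm x"
      by (intro mult_right_mono mult_left_mono prod_merge[OF v j] K(2) l1norm_nonneg)
    finally show "norm (\<phi> (merge j as) x) \<le> K * prod_list (map l1norm as) * l1norm x" .
  next
    fix as :: "'g vec list" and i and a b :: "'g vec" and c x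
    assume v: "valid (Suc n) as" and i: "i < Suc n" and a: "a \<in> l1" and b: "b \<in> l1"
    have len: "length as = Suc n" using v unfolding valid_def by auto
    have jl: "j < length as" using j len by simp
    have vm: "valid n (merge j as)" by (rule valid_merge[OF v j])
    have aj: "as ! j \<in> l1" "as ! (j - 1) \<in> l1" using v j len by (auto simp: valid_nth)
    consider "i < j - 1" | "i = j - 1" | "i = j" | "j < i" by linarith
    thus "\<phi> (merge j (as[i := vlin c a b])) x = c * \<phi> (merge j (as[i := a])) x + \<phi> (merge j (as[i := b])) x"
    proof cases
      case 1
      have "i < n" using 1 j by simp
      thus ?thesis unfolding merge_upd1[OF j(1) jl 1] using cochain_multilinear[OF p vm _ a b] by simp
    next
      case 2
      have k: "j - 1 < n" using j by simp
      have e: "conv (vlin c a b) (as ! j) = vlin c (conv a (as ! j)) (conv b (as ! j))"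
        by (rule conv_lin1[OF a b aj(1)])
      show ?thesis unfolding 2 merge_upd2[OF j(1) jl] e
        using cochain_multilinear[OF p vm k conv_l1[OF a aj(1)] conv_l1[OF b aj(1)]] by simp
    next
      case 3
      have k: "j - 1 < n" using j by simp
      have e: "conv (as ! (j - 1)) (vlin c a b) = vlin c (conv (as ! (j - 1)) a) (conv (as ! (j - 1)) b)"
        by (rule conv_lin2[OF aj(2) a b])
      show ?thesis unfolding 3 merge_upd3[OF j(1) jl] e
        using cochain_multilinear[OF p vm k conv_l1[OF aj(2) a] conv_l1[OF aj(2) b]] by simp
    next
      case 4
      have k: "i - 1 < n" using 4 i by simp
      have il: "i < length as" using i len by simp
      show ?thesis unfolding merge_upd4[OF j(1) 4 il] using cochain_multilinear[OF p vm k a b] by simp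
    qed
  qed
qed

context banach_bimod
begin

lemma cochain_term_left:
  fixes \<phi> :: "'g cochain"
  assumes p: "\<phi> \<in> cochains M n"
  shows "cochain_term M (Suc n) (\<lambda>as x. dlact M (hd as) (\<phi> (tl as)) x)"
proof -
  obtain K where K: "cbound M n \<phi> K" "K \<ge> 0" using cochain_bounded_nonneg[OF p] by blast
  show ?thesis
  proof (rule cochain_termI[where K=K])
    fix as :: "'g vec list" and x y c assume v: "valid (Suc n) as" and x: "x \<in> carr M" and y: "y \<in> carr M"
    have a: "hd as \<in> l1" by (rule valid_hd[OF v])
    show "dlact M (hd as) (\<phi> (tl as)) (vlin c x y) = c * dlact M (hd as) (\<phi> (tl as)) x + dlact M (hd as) (\<phi> (tl as)) y"
      unfolding dlact_def using x y vlin_closed ract_closed ract_lin_left a dual_linear[OF cochain_dual[OF p valid_tl[OF v]]] by simp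
  next
    fix as :: "'g vec list" and x assume "x \<notin> carr M"
    thus "dlact M (hd as) (\<phi> (tl as)) x = 0" unfolding dlact_def by simp
  next
    fix as :: "'g vec list" and x assume v: "valid (Suc n) as" and x: "x \<in> carr M"
    have a: "hd as \<in> l1" by (rule valid_hd[OF v])
    have ne: "as \<noteq> []" using v unfolding valid_def by auto
    have "norm (dlact M (hd as) (\<phi> (tl as)) x) = norm (\<phi> (tl as) (ract M x (hd as)))"
      unfolding dlact_def using x by simp
    also have "\<dots> \<le> K * prod_list (map l1norm (tl as)) * l1norm (ract M x (hd as))"
      by (rule cboundD[OF K(1) valid_tl[OF v] ract_closed[OF a x]])
    also have "\<dots> \<le> K * prod_list (map l1norm (tl as)) * (l1norm (hd as) * l1norm x)"
      by (intro mult_left_mono ract_norm[OF a x] mult_nonneg_nonneg K(2) prod_l1norm_nonneg)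
    also have "\<dots> = K * prod_list (map l1norm as) * l1norm x"
      using prod_hd[OF ne, of l1norm] by (simp add: mult_ac)
    finally show "norm (dlact M (hd as) (\<phi> (tl as)) x) \<le> K * prod_list (map l1norm as) * l1norm x" .
  next
    fix as :: "'g vec list" and i and a b :: "'g vec" and c x
    assume v: "valid (Suc n) as" and i: "i < Suc n" and a: "a \<in> l1" and b: "b \<in> l1"
    have ne: "as \<noteq> []" using v unfolding valid_def by auto
    show "dlact M (hd (as[i := vlin c a b])) (\<phi> (tl (as[i := vlin c a b]))) x =
          c * dlact M (hd (as[i := a])) (\<phi> (tl (as[i := a]))) x + dlact M (hd (as[i := b])) (\<phi> (tl (as[i := b]))) x"
    proof (cases "i = 0")
      case True
      show ?thesis unfolding hd_upd[OF ne] tl_upd using True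
        unfolding dlact_def using ract_closed[OF a] ract_lin_right[OF a] ract_closed[OF b] a b dual_linear[OF cochain_dual[OF p valid_tl[OF v]]]
        by simp
    next
      case False
      have "i - 1 < n" using i False by simp
      thus ?thesis unfolding hd_upd[OF ne] tl_upd using False cochain_multilinear[OF p valid_tl[OF v] _ a b]
        unfolding dlact_def by simp
    qed
  qed
qed

lemma cochain_term_right:
  fixes \<phi> :: "'g cochain"
  assumes p: "\<phi> \<in> cochains M n"
  shows "cochain_term M (Suc n) (\<lambda>as x. dract M (\<phi> (butlast as)) (last as) x)"
proof -
  obtain K where K: "cbound M n \<phi> K" "K \<ge> 0" using cochain_bounded_nonneg[OF p] by blast
  show ?thesis
  proof (rule cochain_termI[where K=K])
    fix as :: "'g vec list" and x y c assume v: "valid (Suc n) as" and x: "x \<in> carr M" and y: "y \<in> carr M"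
    have a: "last as \<in> l1" by (rule valid_last[OF v])
    show "dract M (\<phi> (butlast as)) (last as) (vlin c x y) = c * dract M (\<phi> (butlast as)) (last as) x + dract M (\<phi> (butlast as)) (last as) y"
      unfolding dract_def using x y vlin_closed lact_closed lact_lin_right a dual_linear[OF cochain_dual[OF p valid_butlast[OF v]]] by simp
  next
    fix as :: "'g vec list" and x assume "x \<notin> carr M"
    thus "dract M (\<phi> (butlast as)) (last as) x = 0" unfolding dract_def by simp
  next
    fix as :: "'g vec list" and x assume v: "valid (Suc n) as" and x: "x \<in> carr M"
    have a: "last as \<in> l1" by (rule valid_last[OF v])
    have ne: "as \<noteq> []" using v unfolding valid_def by auto
    have "norm (dract M (\<phi> (butlast as)) (last as) x) = norm (\<phi> (butlast as) (lact M (last as) x))"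
      unfolding dract_def using x by simp
    also have "\<dots> \<le> K * prod_list (map l1norm (butlast as)) * l1norm (lact M (last as) x)"
      by (rule cboundD[OF K(1) valid_butlast[OF v] lact_closed[OF a x]])
    also have "\<dots> \<le> K * prod_list (map l1norm (butlast as)) * (l1norm (last as) * l1norm x)"
      by (intro mult_left_mono lact_norm[OF a x] mult_nonneg_nonneg K(2) prod_l1norm_nonneg)
    also have "\<dots> = K * prod_list (map l1norm as) * l1norm x"
      using prod_last[OF ne, of l1norm] by (simp add: mult_ac)
    finally show "norm (dract M (\<phi> (butlast as)) (last as) x) \<le> K * prod_list (map l1norm as) * l1norm x" .
  next
    fix as :: "'g vec list" and i and a b :: "'g vec" and c x
    assume v: "valid (Suc n) as" and i: "i < Suc n" and a: "a \<in> l1" and b: "b \<in> l1"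
    have ne: "as \<noteq> []" and len: "length as = Suc n" using v unfolding valid_def by auto
    show "dract M (\<phi> (butlast (as[i := vlin c a b]))) (last (as[i := vlin c a b])) x =
          c * dract M (\<phi> (butlast (as[i := a]))) (last (as[i := a])) x + dract M (\<phi> (butlast (as[i := b]))) (last (as[i := b])) x"
    proof (cases "i = n")
      case True
      show ?thesis unfolding last_list_update[OF ne] butlast_list_update using True len
        unfolding dract_def using lact_closed[OF a] lact_lin_left[OF a] lact_closed[OF b] a b dual_linear[OF cochain_dual[OF p valid_butlast[OF v]]]
        by simp
    next
      case False
      have "i < n" using i False by simp
      thus ?thesis unfolding last_list_update[OF ne] butlast_list_update using False len cochain_multilinear[OF p valid_butlast[OF v] _ a b]
        unfolding dract_def by simp
    qed
  qed
qed

lemma cobound_cochain: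
  fixes \<phi> :: "'g cochain"
  assumes p: "\<phi> \<in> cochains M n"
  shows "cobound M n \<phi> \<in> cochains M (Suc n)"
proof -
  define E where "E = (\<lambda>as x. dlact M (hd as) (\<phi> (tl as)) x
          + (\<Sum>i = 1..n. (-1) ^ i * \<phi> (merge i as) x)
          + (-1) ^ (Suc n) * dract M (\<phi> (butlast as)) (last as) x)"
  have "cochain_term M (Suc n) E" unfolding E_def
    by (intro cochain_term_add cochain_term_left[OF p] cochain_term_scale cochain_term_right[OF p]
        cochain_term_sum cochain_term_merge[OF p]) auto
  thus ?thesis unfolding cochain_term_def E_def cobound_def valid_part_def .
qed

end

lemma twr_vlin_right: assumes "a \<in> l1" "b \<in> l1" shows "twr x (vlin c a b) = vlin c (twr x a) (twr x b)"
  unfolding twr_def by (simp only: aug_vlin[OF assms]) (simp add: vlin_def fun_eq_iff algebra_simps)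
lemma twr_vlin_left: "twr (vlin c x y) a = vlin c (twr x a) (twr y a)"
  unfolding twr_def vlin_def by (simp add: fun_eq_iff algebra_simps)
lemma twr_I0: "a \<in> l1 \<Longrightarrow> x \<in> I0 \<Longrightarrow> twr x a \<in> I0"
  unfolding twr_def by (intro I0I scale_l1) (auto simp: I0_l1 aug_scale I0_aug)
lemma twr_norm: "a \<in> l1 \<Longrightarrow> l1norm (twr x a) \<le> l1norm a * l1norm x"
  unfolding twr_def l1norm_scale by (intro mult_right_mono norm_aug l1norm_nonneg)
lemma twl_I0: "a \<in> l1 \<Longrightarrow> x \<in> I0 \<Longrightarrow> twl a x \<in> I0"
  by (intro I0I twl_l1) (auto simp: I0_l1 twl_aug I0_aug)
lemma conv_I0_right: "a \<in> l1 \<Longrightarrow> x \<in> I0 \<Longrightarrow> conv a x \<in> I0"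
  by (intro I0I conv_l1) (auto simp: I0_l1 conv_aug I0_aug)
lemma conv_I0_left: "a \<in> l1 \<Longrightarrow> x \<in> I0 \<Longrightarrow> conv x a \<in> I0"
  by (intro I0I conv_l1) (auto simp: I0_l1 conv_aug I0_aug)

lemma carr_I0mod: "carr I0mod = I0" unfolding I0mod_def by simp
lemma carr_I0tw: "carr I0tw = I0" unfolding I0tw_def by simp

interpretation I0mod: banach_bimod "I0mod :: ('g::group_add) bimod"
  unfolding I0mod_def
proof unfold_locales
  fix a x :: "'g vec" assume a: "a \<in> l1" and x: "x \<in> carr \<lparr>carr = I0, lact = conv, ract = conv\<rparr>"
  hence x: "x \<in> I0" by simp
  show "l1norm (lact \<lparr>carr = I0, lact = conv, ract = conv\<rparr> a x) \<le> l1norm a * l1norm x"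
    using conv_norm[OF a I0_l1[OF x]] by simp
  show "l1norm (ract \<lparr>carr = I0, lact = conv, ract = conv\<rparr> x a) \<le> l1norm a * l1norm x"
    using conv_norm[OF I0_l1[OF x] a] by (simp add: mult.commute)
qed (auto simp: I0_vlin I0_l1 conv_I0_right conv_I0_left conv_lin1 conv_lin2)

interpretation I0tw: banach_bimod "I0tw :: ('g::group_add) bimod"
  unfolding I0tw_def
  by unfold_locales
     (auto simp: I0_vlin I0_l1 twl_I0 twr_I0 twl_norm twr_norm twl_lin1 twl_lin2 twr_vlin_right twr_vlin_left)

text \<open>I_0(G) and I_0(G)^tw have the same underlying space, hence the same cochains and bounds.\<close>
lemma cochains_I0tw: "cochains I0tw n = cochains I0mod n"
  unfolding cochains_def cbound_def I0mod_def I0tw_def by simp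
lemma cbound_I0tw: "cbound I0tw n = cbound I0mod n"
  unfolding cbound_def I0mod_def I0tw_def by (simp add: fun_eq_iff)

section \<open>The twisting isomorphism Theta\<close>

definition twist_slot :: "('g::group_add \<Rightarrow> 'g) \<Rightarrow> nat \<Rightarrow> nat \<Rightarrow> 'g cochain \<Rightarrow> 'g cochain" where
  "twist_slot h n k \<Phi> = (\<lambda>as x. if valid n as \<and> x \<in> I0 then
      (\<Sum>\<^sub>\<infinity>g. (as ! k) g * \<Phi> (as[k := pt g]) (rtrans (h g) x)) else 0)"

lemma twist_term_bound:
  fixes \<Phi> :: "('g::group_add) cochain"
  assumes p: "\<Phi> \<in> cochains I0mod n" and B: "cbound I0mod n \<Phi> B" and v: "valid n as" and k: "k < n"
    and x: "x \<in> I0"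
  shows "norm (\<Phi> (as[k := pt g]) (rtrans (h g) x)) \<le>
     B * (prod_list (map l1norm (take k as)) * prod_list (map l1norm (drop (Suc k) as))) * l1norm x"
proof -
  have len: "length as = n" using v unfolding valid_def by simp
  have "norm (\<Phi> (as[k := pt g]) (rtrans (h g) x)) \<le> B * prod_list (map l1norm (as[k := pt g])) * l1norm (rtrans (h g) x)"
    by (rule cboundD[OF B valid_upd[OF v pt_l1]]) (simp add: carr_I0mod rtrans_I0 x)
  also have "\<dots> = B * (prod_list (map l1norm (take k as)) * prod_list (map l1norm (drop (Suc k) as))) * l1norm x"
    using prod_upd[of k as l1norm "pt g"] len k by (simp add: l1norm_pt l1norm_rtrans)
  finally show ?thesis .
qed

lemma twist_term_summable:
  fixes \<Phi> :: "('g::group_add) cochain"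
  assumes p: "\<Phi> \<in> cochains I0mod n" and v: "valid n as" and k: "k < n" and x: "x \<in> I0" and a: "a \<in> l1"
  shows "(\<lambda>g. norm (a g * \<Phi> (as[k := pt g]) (rtrans (h g) x))) summable_on UNIV"
proof -
  obtain B where B: "cbound I0mod n \<Phi> B" using cochain_bounded[OF p] by blast
  define D where "D = B * (prod_list (map l1norm (take k as)) * prod_list (map l1norm (drop (Suc k) as))) * l1norm x"
  have F: "\<And>g. norm (\<Phi> (as[k := pt g]) (rtrans (h g) x)) \<le> D" unfolding D_def by (rule twist_term_bound[OF p B v k x])
  show ?thesis
  proof (rule summable_on_comparison_test)
    show "(\<lambda>g. norm (a g) * D) summable_on UNIV" using a unfolding l1_def by (intro summable_on_cmult_left) simp
    fix g show "norm (a g * \<Phi> (as[k := pt g]) (rtrans (h g) x)) \<le> norm (a g) * D"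
      using F[of g] by (simp add: norm_mult mult_left_mono)
  qed simp
qed

lemma twist_slot_bound:
  fixes \<Phi> :: "('g::group_add) cochain"
  assumes p: "\<Phi> \<in> cochains I0mod n" and B: "cbound I0mod n \<Phi> B" and v: "valid n as" and k: "k < n"
    and x: "x \<in> I0"
  shows "norm (twist_slot h n k \<Phi> as x) \<le> B * prod_list (map l1norm as) * l1norm x"
proof -
  have len: "length as = n" using v unfolding valid_def by simp
  have a: "as ! k \<in> l1" using v k by (simp add: valid_nth)
  define D where "D = B * (prod_list (map l1norm (take k as)) * prod_list (map l1norm (drop (Suc k) as))) * l1norm x"
  have F: "\<And>g. norm (\<Phi> (as[k := pt g]) (rtrans (h g) x)) \<le> D" unfolding D_def by (rule twist_term_bound[OF p B v k x])
  have "norm (twist_slot h n k \<Phi> as x) = norm (\<Sum>\<^sub>\<infinity>g. (as ! k) g * \<Phi> (as[k := pt g]) (rtrans (h g) x))"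
    unfolding twist_slot_def using v x by simp
  also have "\<dots> \<le> (\<Sum>\<^sub>\<infinity>g. norm ((as ! k) g * \<Phi> (as[k := pt g]) (rtrans (h g) x)))"
    by (rule norm_infsum_bound[OF twist_term_summable[OF p v k x a]])
  also have "\<dots> \<le> (\<Sum>\<^sub>\<infinity>g. norm ((as ! k) g) * D)"
  proof (rule infsum_mono)
    show "(\<lambda>g. norm ((as ! k) g * \<Phi> (as[k := pt g]) (rtrans (h g) x))) summable_on UNIV" by (rule twist_term_summable[OF p v k x a])
    show "(\<lambda>g. norm ((as ! k) g) * D) summable_on UNIV" using a unfolding l1_def by (intro summable_on_cmult_left) simp
    fix g show "norm ((as ! k) g * \<Phi> (as[k := pt g]) (rtrans (h g) x)) \<le> norm ((as ! k) g) * D"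
      using F[of g] by (simp add: norm_mult mult_left_mono)
  qed
  also have "\<dots> = l1norm (as ! k) * D" unfolding l1norm_def by (simp add: infsum_cmult_left')
  also have "\<dots> = B * prod_list (map l1norm as) * l1norm x"
    unfolding D_def using prod_upd[of k as l1norm "as ! k"] len k by (simp add: mult_ac)
  finally show ?thesis .
qed

lemma twist_slot_linear:
  fixes \<Phi> :: "('g::group_add) cochain"
  assumes p: "\<Phi> \<in> cochains I0mod n" and k: "k < n" and v: "valid n as" and x: "x \<in> I0" and y: "y \<in> I0"
  shows "twist_slot h n k \<Phi> as (vlin c x y) = c * twist_slot h n k \<Phi> as x + twist_slot h n k \<Phi> as y"
proof -
  have a: "as ! k \<in> l1" using v k by (simp add: valid_nth)
  have "twist_slot h n k \<Phi> as (vlin c x y) = (\<Sum>\<^sub>\<infinity>g. c * ((as ! k) g * \<Phi> (as[k := pt g]) (rtrans (h g) x)) + (as ! k) g * \<Phi> (as[k := pt g]) (rtrans (h g) y))"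
    unfolding twist_slot_def using v I0_vlin[OF x y]
    by (simp add: rtrans_vlin) (rule infsum_cong, simp add: dual_linear[OF cochain_dual[OF p valid_upd[OF v pt_l1]], unfolded carr_I0mod] rtrans_I0 x y algebra_simps)
  also have "\<dots> = c * twist_slot h n k \<Phi> as x + twist_slot h n k \<Phi> as y"
    unfolding twist_slot_def using v x y
    by (simp only: if_True simp_thms) (rule infsum_lin[OF abs_summable_summable[OF twist_term_summable[OF p v k x a]] abs_summable_summable[OF twist_term_summable[OF p v k y a]]])
  finally show ?thesis .
qed

text \<open>Multilinearity in the arguments: for the twisted slot k this is linearity of the
  expansion coefficients, for the other slots it is inherited from Phi.\<close>
lemma twist_slot_multilinear:
  fixes \<Phi> :: "('g::group_add) cochain"
  assumes p: "\<Phi> \<in> cochains I0mod n" and k: "k < n"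
    and v: "valid n as" and i: "i < n" and a: "a \<in> l1" and b: "b \<in> l1" and x: "x \<in> I0"
  shows "twist_slot h n k \<Phi> (as[i := vlin c a b]) x = c * twist_slot h n k \<Phi> (as[i := a]) x + twist_slot h n k \<Phi> (as[i := b]) x"
proof -
  have len: "length as = n" using v unfolding valid_def by simp
  have vv: "valid n (as[i := vlin c a b])" "valid n (as[i := a])" "valid n (as[i := b])"
    using valid_upd[OF v] a b vlin_l1[OF a b] by auto
  show ?thesis
  proof (cases "i = k")
    case True
    have "twist_slot h n k \<Phi> (as[i := vlin c a b]) x = (\<Sum>\<^sub>\<infinity>g. c * (a g * \<Phi> (as[k := pt g]) (rtrans (h g) x)) + b g * \<Phi> (as[k := pt g]) (rtrans (h g) x))"
      unfolding twist_slot_def using vv x True len k by (simp add: vlin_def algebra_simps)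
    also have "\<dots> = c * twist_slot h n k \<Phi> (as[i := a]) x + twist_slot h n k \<Phi> (as[i := b]) x"
      unfolding twist_slot_def using vv x True len k
      by (simp only: if_True simp_thms nth_list_update_eq list_update_overwrite)
        (rule infsum_lin[OF abs_summable_summable[OF twist_term_summable[OF p v k x a]] abs_summable_summable[OF twist_term_summable[OF p v k x b]]])
    finally show ?thesis .
  next
    case False
    have sw: "\<And>u g. (as[i := u])[k := pt g] = (as[k := pt g])[i := u]" using False by (rule list_update_swap)
    have nk: "\<And>u. (as[i := u]) ! k = as ! k" using False by simp
    have "twist_slot h n k \<Phi> (as[i := vlin c a b]) x = (\<Sum>\<^sub>\<infinity>g. c * (((as[i := a]) ! k) g * \<Phi> ((as[i := a])[k := pt g]) (rtrans (h g) x)) + ((as[i := b]) ! k) g * \<Phi> ((as[i := b])[k := pt g]) (rtrans (h g) x))"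
      unfolding twist_slot_def using vv x
      by (simp only: if_True simp_thms nk sw) (rule infsum_cong, simp add: cochain_multilinear[OF p valid_upd[OF v pt_l1] i a b] algebra_simps)
    also have "\<dots> = c * twist_slot h n k \<Phi> (as[i := a]) x + twist_slot h n k \<Phi> (as[i := b]) x"
      unfolding twist_slot_def using vv x
      by (simp only: if_True simp_thms)
        (rule infsum_lin[OF abs_summable_summable[OF twist_term_summable[OF p vv(2) k x valid_nth[OF vv(2) k]]] abs_summable_summable[OF twist_term_summable[OF p vv(3) k x valid_nth[OF vv(3) k]]]])
    finally show ?thesis .
  qed
qed

lemma twist_slot_cochain:
  fixes \<Phi> :: "('g::group_add) cochain"
  assumes p: "\<Phi> \<in> cochains I0mod n" and B: "cbound I0mod n \<Phi> B" and k: "k < n"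
  shows "twist_slot h n k \<Phi> \<in> cochains I0mod n \<and> cbound I0mod n (twist_slot h n k \<Phi>) B"
proof -
  have cb: "cbound I0mod n (twist_slot h n k \<Phi>) B"
    unfolding cbound_def carr_I0mod using twist_slot_bound[OF p B _ k] by blast
  have "twist_slot h n k \<Phi> \<in> cochains I0mod n"
  proof (rule cochainI[OF _ _ _ cb])
    fix as :: "'g vec list" assume v: "valid n as"
    show "twist_slot h n k \<Phi> as \<in> dualset (carr I0mod)" unfolding carr_I0mod
    proof (rule dualI[where K="B * prod_list (map l1norm as)"])
      fix x y :: "'g vec" and c assume "x \<in> I0" "y \<in> I0"
      thus "twist_slot h n k \<Phi> as (vlin c x y) = c * twist_slot h n k \<Phi> as x + twist_slot h n k \<Phi> as y"
        by (rule twist_slot_linear[OF p k v])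
    next
      fix x :: "'g vec" assume "x \<in> I0"
      thus "norm (twist_slot h n k \<Phi> as x) \<le> B * prod_list (map l1norm as) * l1norm x"
        by (rule twist_slot_bound[OF p B v k])
    qed (simp add: twist_slot_def)
  next
    fix as :: "'g vec list" and i and a b :: "'g vec" and c
    assume hyps: "valid n as" "i < n" "a \<in> l1" "b \<in> l1"
    show "twist_slot h n k \<Phi> (as[i := vlin c a b]) = (\<lambda>x. c * twist_slot h n k \<Phi> (as[i := a]) x + twist_slot h n k \<Phi> (as[i := b]) x)"
    proof
      fix x show "twist_slot h n k \<Phi> (as[i := vlin c a b]) x = c * twist_slot h n k \<Phi> (as[i := a]) x + twist_slot h n k \<Phi> (as[i := b]) x"
        using twist_slot_multilinear[OF p k hyps] by (cases "x \<in> I0") (auto simp: twist_slot_def)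
    qed
  qed (simp add: twist_slot_def fun_eq_iff)
  with cb show ?thesis by blast
qed

lemma twist_slot_pt:
  assumes v: "valid n as" and k: "k < n" and e: "as ! k = pt g0" and x: "x \<in> I0"
  shows "twist_slot h n k \<Phi> as x = \<Phi> as (rtrans (h g0) x)"
proof -
  have "twist_slot h n k \<Phi> as x = (\<Sum>\<^sub>\<infinity>g. if g = g0 then \<Phi> (as[k := pt g]) (rtrans (h g) x) else 0)"
    unfolding twist_slot_def using v x by (simp only: if_True simp_thms) (rule infsum_cong, simp add: e pt_def)
  also have "\<dots> = \<Phi> (as[k := pt g0]) (rtrans (h g0) x)" by (rule infsum_single)
  also have "as[k := pt g0] = as" using list_update_id[of as k] e by simp
  finally show ?thesis .
qed

definition twist_slots :: "('g::group_add \<Rightarrow> 'g) \<Rightarrow> nat \<Rightarrow> nat list \<Rightarrow> 'g cochain \<Rightarrow> 'g cochain" where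
  "twist_slots h n ks \<Phi> = foldr (\<lambda>k \<Psi>. twist_slot h n k \<Psi>) ks \<Phi>"

lemma twist_slots_Nil[simp]: "twist_slots h n [] \<Phi> = \<Phi>" unfolding twist_slots_def by simp
lemma twist_slots_Cons[simp]: "twist_slots h n (k # ks) \<Phi> = twist_slot h n k (twist_slots h n ks \<Phi>)" unfolding twist_slots_def by simp

lemma twist_slots_cochain:
  assumes "\<Phi> \<in> cochains I0mod n" "cbound I0mod n \<Phi> B" "\<forall>k\<in>set ks. k < n"
  shows "twist_slots h n ks \<Phi> \<in> cochains I0mod n \<and> cbound I0mod n (twist_slots h n ks \<Phi>) B"
  using assms by (induction ks) (auto dest: twist_slot_cochain)

lemma twist_slots_pt:
  assumes "\<forall>k\<in>set ks. k < n" "length gs = n" "x \<in> I0"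
  shows "twist_slots h n ks \<Phi> (map pt gs) x = \<Phi> (map pt gs) (rtrans (sum_list (map (\<lambda>k. h (gs ! k)) ks)) x)"
  using assms
proof (induction ks arbitrary: x)
  case Nil thus ?case by (simp add: rtrans_0)
next
  case (Cons k ks)
  have "twist_slots h n (k # ks) \<Phi> (map pt gs) x = twist_slots h n ks \<Phi> (map pt gs) (rtrans (h (gs ! k)) x)"
    using Cons.prems by (simp add: twist_slot_pt valid_map_pt)
  also have "\<dots> = \<Phi> (map pt gs) (rtrans (sum_list (map (\<lambda>k. h (gs ! k)) ks)) (rtrans (h (gs ! k)) x))"
    using Cons by (simp add: rtrans_I0)
  finally show ?case by (simp add: rtrans_rtrans)
qed

text \<open>Theta twists all slots by inverses, along the list n-1, ..., 0, so that on point masses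
  the test vector is translated by -g_(n-1) + ... + -g_0 = -(g_0 + ... + g_(n-1)); Theta_inv
  twists by the group elements themselves along 0, ..., n-1, undoing this.\<close>
definition Theta :: "nat \<Rightarrow> ('g::group_add) cochain \<Rightarrow> 'g cochain" where
  "Theta n \<psi> = twist_slots uminus n (rev [0..<n]) \<psi>"
definition Theta_inv :: "nat \<Rightarrow> ('g::group_add) cochain \<Rightarrow> 'g cochain" where
  "Theta_inv n \<psi> = twist_slots id n [0..<n] \<psi>"

lemma sum_neg_rev: "sum_list (rev (map uminus gs)) = - sum_list (gs :: ('g::group_add) list)"
  by (induction gs) (auto simp: minus_add)

lemma Theta_cochain: "\<psi> \<in> cochains I0mod n \<Longrightarrow> cbound I0mod n \<psi> B \<Longrightarrow>
    Theta n \<psi> \<in> cochains I0mod n \<and> cbound I0mod n (Theta n \<psi>) B"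
  unfolding Theta_def by (rule twist_slots_cochain) auto
lemma Theta_inv_cochain: "\<psi> \<in> cochains I0mod n \<Longrightarrow> cbound I0mod n \<psi> B \<Longrightarrow>
    Theta_inv n \<psi> \<in> cochains I0mod n \<and> cbound I0mod n (Theta_inv n \<psi>) B"
  unfolding Theta_inv_def by (rule twist_slots_cochain) auto
lemma Theta_mem: "\<psi> \<in> cochains I0mod n \<Longrightarrow> Theta n \<psi> \<in> cochains I0mod n"
  using Theta_cochain cochain_bounded by blast
lemma Theta_inv_mem: "\<psi> \<in> cochains I0mod n \<Longrightarrow> Theta_inv n \<psi> \<in> cochains I0mod n"
  using Theta_inv_cochain cochain_bounded by blast

lemma Theta_pt: "length gs = n \<Longrightarrow> x \<in> I0 \<Longrightarrow> Theta n \<psi> (map pt gs) x = \<psi> (map pt gs) (rtrans (- sum_list gs) x)"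
proof -
  assume l: "length gs = n" and x: "x \<in> I0"
  have m: "map (\<lambda>k. gs ! k) [0..<n] = gs" using map_nth[of gs] l by simp
  have "map (\<lambda>k. - (gs ! k)) (rev [0..<n]) = rev (map uminus (map (\<lambda>k. gs ! k) [0..<n]))"
    by (simp add: rev_map)
  hence "map (\<lambda>k. - (gs ! k)) (rev [0..<n]) = rev (map uminus gs)" by (simp only: m)
  hence "sum_list (map (\<lambda>k. - (gs ! k)) (rev [0..<n])) = - sum_list gs" by (simp add: sum_neg_rev)
  thus ?thesis unfolding Theta_def using twist_slots_pt[of "rev [0..<n]" n gs x uminus \<psi>] l x by simp
qed

lemma Theta_inv_pt: "length gs = n \<Longrightarrow> x \<in> I0 \<Longrightarrow> Theta_inv n \<psi> (map pt gs) x = \<psi> (map pt gs) (rtrans (sum_list gs) x)"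
proof -
  assume l: "length gs = n" and x: "x \<in> I0"
  have "map (\<lambda>k. id (gs ! k)) [0..<n] = gs" using l map_nth[of gs] by simp
  thus ?thesis unfolding Theta_inv_def using twist_slots_pt[of "[0..<n]" n gs x id \<psi>] l x by simp
qed

lemma cochain_eq_on_points_I0:
  assumes p: "\<Phi> \<in> cochains I0mod n" and q: "\<Psi> \<in> cochains I0mod n"
    and e: "\<And>gs x. length gs = n \<Longrightarrow> x \<in> I0 \<Longrightarrow> \<Phi> (map pt gs) x = \<Psi> (map pt gs) x"
  shows "\<Phi> = \<Psi>"
proof (rule cochain_eq_on_points[OF p q], intro allI impI ext)
  fix gs :: "'a list" and x assume l: "length gs = n"
  show "\<Phi> (map pt gs) x = \<Psi> (map pt gs) x"
    using e[OF l] cochain_zero_off[OF p] cochain_zero_off[OF q] by (cases "x \<in> I0") (auto simp: carr_I0mod)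
qed

lemma Theta_inv_Theta: "\<psi> \<in> cochains I0mod n \<Longrightarrow> Theta_inv n (Theta n \<psi>) = \<psi>"
  by (rule cochain_eq_on_points_I0[OF Theta_inv_mem[OF Theta_mem]]) (auto simp: Theta_inv_pt Theta_pt rtrans_I0 rtrans_rtrans rtrans_0)
lemma Theta_Theta_inv: "\<psi> \<in> cochains I0mod n \<Longrightarrow> Theta n (Theta_inv n \<psi>) = \<psi>"
  by (rule cochain_eq_on_points_I0[OF Theta_mem[OF Theta_inv_mem]]) (auto simp: Theta_inv_pt Theta_pt rtrans_I0 rtrans_rtrans rtrans_0)

lemma Theta_linear: "\<psi> \<in> cochains I0mod n \<Longrightarrow> \<xi> \<in> cochains I0mod n \<Longrightarrow> Theta n (clin c \<psi> \<xi>) = clin c (Theta n \<psi>) (Theta n \<xi>)"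
  by (rule cochain_eq_on_points_I0[OF Theta_mem[OF clin_cochain] clin_cochain[OF Theta_mem Theta_mem]])
     (auto simp: Theta_pt clin_def rtrans_I0)

lemma Theta_bij: "bij_betw (Theta n) (cochains I0mod n) (cochains I0mod n)"
  by (rule bij_betwI[where g="Theta_inv n"]) (auto intro: Theta_mem Theta_inv_mem Theta_inv_Theta Theta_Theta_inv)

definition merge_group :: "nat \<Rightarrow> 'g::group_add list \<Rightarrow> 'g list" where
  "merge_group i gs = take (i - 1) gs @ [gs ! (i - 1) + gs ! i] @ drop (i + 1) gs"

lemma merge_pt: "1 \<le> i \<Longrightarrow> i < length gs \<Longrightarrow> merge i (map pt gs) = map pt (merge_group i gs)"
  unfolding merge_def merge_group_def by (simp add: take_map drop_map conv_pt_pt)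

lemma length_merge_group: "1 \<le> i \<Longrightarrow> i < length gs \<Longrightarrow> length (merge_group i gs) = length gs - 1"
  unfolding merge_group_def by simp

lemma sum_merge_group: assumes "1 \<le> i" "i < length gs" shows "sum_list (merge_group i gs) = sum_list gs"
proof -
  have "sum_list gs = sum_list (take (i - 1) gs @ gs ! (i - 1) # gs ! i # drop (i + 1) gs)"
    using split_at_pair[OF assms] by simp
  thus ?thesis unfolding merge_group_def by (simp add: add.assoc)
qed

text \<open>The three kinds of terms of the coboundary of Theta psi at point masses
  e_g1, ..., e_g(n+1) equal the corresponding terms for psi, tested on x * e_s^-1 where
  s = g1 ... g(n+1).  First the left action term: the trivial right action of I_0^tw
  is compensated by the translation of the test vector.\<close>
lemma Theta_cobound_left:
  fixes \<psi> :: "('g::group_add) cochain"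
  assumes l: "length gs = Suc n" and x: "x \<in> I0"
  shows "dlact I0tw (hd (map pt gs)) (Theta n \<psi> (tl (map pt gs))) x =
         dlact I0mod (hd (map pt gs)) (\<psi> (tl (map pt gs))) (rtrans (- sum_list gs) x)"
proof -
  have ne: "gs \<noteq> []" using l by auto
  have s: "sum_list gs = hd gs + sum_list (tl gs)" using ne by (cases gs) auto
  have "dlact I0tw (hd (map pt gs)) (Theta n \<psi> (tl (map pt gs))) x = \<psi> (map pt (tl gs)) (rtrans (- sum_list (tl gs)) x)"
    unfolding dlact_def carr_I0tw using x ne l by (simp add: hd_map map_tl[symmetric] twr_pt I0tw_def Theta_pt)
  also have "rtrans (- sum_list (tl gs)) x = rtrans (hd gs) (rtrans (- sum_list gs) x)"
    unfolding rtrans_rtrans s by (simp add: minus_add add.assoc)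
  finally show ?thesis unfolding dlact_def using rtrans_I0[OF x] ne
    by (simp add: I0mod_def hd_map map_tl[symmetric] conv_pt_right)
qed

text \<open>Merging two arguments does not change the product of the group elements.\<close>
lemma Theta_cobound_merge:
  fixes \<psi> :: "('g::group_add) cochain"
  assumes l: "length gs = Suc n" and x: "x \<in> I0" and i: "i \<in> {1..n}"
  shows "Theta n \<psi> (merge i (map pt gs)) x = \<psi> (merge i (map pt gs)) (rtrans (- sum_list gs) x)"
proof -
  have i': "1 \<le> i" "i < length gs" using i l by auto
  show ?thesis unfolding merge_pt[OF i'] sum_merge_group[OF i', symmetric]
    by (rule Theta_pt) (use i' l x length_merge_group[OF i'] in auto)
qed

text \<open>The right action term: the conjugation action of I_0^tw is a left multiplication
  after translating by the last group element.\<close>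
lemma Theta_cobound_right:
  fixes \<psi> :: "('g::group_add) cochain"
  assumes l: "length gs = Suc n" and x: "x \<in> I0"
  shows "dract I0tw (Theta n \<psi> (butlast (map pt gs))) (last (map pt gs)) x =
         dract I0mod (\<psi> (butlast (map pt gs))) (last (map pt gs)) (rtrans (- sum_list gs) x)"
proof -
  have ne: "gs \<noteq> []" using l by auto
  have s: "sum_list gs = sum_list (butlast gs) + last gs" using ne
    by (metis append_butlast_last_id sum_list_append sum_list_simps(1) sum_list_simps(2) add_0_right)
  have tw: "twl (pt (last gs)) x \<in> I0" by (rule twl_I0[OF pt_l1 x])
  have "dract I0tw (Theta n \<psi> (butlast (map pt gs))) (last (map pt gs)) x =
        \<psi> (map pt (butlast gs)) (rtrans (- sum_list (butlast gs)) (twl (pt (last gs)) x))"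
    unfolding dract_def carr_I0tw using x ne l tw by (simp add: last_map map_butlast[symmetric] I0tw_def Theta_pt)
  also have "rtrans (- sum_list (butlast gs)) (twl (pt (last gs)) x) = conv (pt (last gs)) (rtrans (- sum_list gs) x)"
    unfolding twl_pt conv_pt_left rtrans_def s by (simp add: add.assoc)
  finally show ?thesis unfolding dract_def using rtrans_I0[OF x] ne
    by (simp add: I0mod_def last_map map_butlast[symmetric])
qed

lemma Theta_chain:
  fixes \<psi> :: "('g::group_add) cochain"
  assumes p: "\<psi> \<in> cochains I0mod n"
  shows "cobound I0tw n (Theta n \<psi>) = Theta (Suc n) (cobound I0mod n \<psi>)"
proof (rule cochain_eq_on_points_I0)
  show "cobound I0tw n (Theta n \<psi>) \<in> cochains I0mod (Suc n)"
    unfolding cochains_I0tw[symmetric, of "Suc n"] by (rule I0tw.cobound_cochain) (simp add: cochains_I0tw Theta_mem p)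
  show "Theta (Suc n) (cobound I0mod n \<psi>) \<in> cochains I0mod (Suc n)"
    by (rule Theta_mem[OF I0mod.cobound_cochain[OF p]])
next
  fix gs :: "'g list" and x :: "'g vec" assume l: "length gs = Suc n" and x: "x \<in> I0"
  have v: "valid (Suc n) (map pt gs)" by (rule valid_map_pt[OF l])
  have "cobound I0tw n (Theta n \<psi>) (map pt gs) x = cobound I0mod n \<psi> (map pt gs) (rtrans (- sum_list gs) x)"
    unfolding cobound_def using v Theta_cobound_left[OF l x] Theta_cobound_merge[OF l x] Theta_cobound_right[OF l x]
    by simp
  also have "\<dots> = Theta (Suc n) (cobound I0mod n \<psi>) (map pt gs) x"
    using Theta_pt[OF l x] by simp
  finally show "cobound I0tw n (Theta n \<psi>) (map pt gs) x = Theta (Suc n) (cobound I0mod n \<psi>) (map pt gs) x" .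
qed
section \<open>Isomorphic bimodules have isomorphic cohomology\<close>

definition pullback :: "'g bimod \<Rightarrow> ('g vec \<Rightarrow> 'g vec) \<Rightarrow> 'g cochain \<Rightarrow> 'g cochain" where
  "pullback N W \<psi> = (\<lambda>as y. if y \<in> carr N then \<psi> as (W y) else 0)"

lemma pullback_cochain:
  fixes M N :: "'g bimod" and \<psi> :: "'g cochain"
  assumes W: "\<And>y. y \<in> carr N \<Longrightarrow> W y \<in> carr M"
    and Wlin: "\<And>x y c. x \<in> carr N \<Longrightarrow> y \<in> carr N \<Longrightarrow> W (vlin c x y) = vlin c (W x) (W y)"
    and Nlin: "\<And>x y c. x \<in> carr N \<Longrightarrow> y \<in> carr N \<Longrightarrow> vlin c x y \<in> carr N"
    and Wb: "\<And>y. y \<in> carr N \<Longrightarrow> l1norm (W y) \<le> Kw * l1norm y"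
    and p: "\<psi> \<in> cochains M n"
  shows "pullback N W \<psi> \<in> cochains N n"
proof -
  obtain K where K: "cbound M n \<psi> K" "K \<ge> 0" using cochain_bounded_nonneg[OF p] by blast
  have bnd: "cbound N n (pullback N W \<psi>) (K * Kw)" unfolding cbound_def
  proof (intro allI impI)
    fix as :: "'g vec list" and y assume v: "valid n as" and y: "y \<in> carr N"
    have "norm (pullback N W \<psi> as y) = norm (\<psi> as (W y))" unfolding pullback_def using y by simp
    also have "\<dots> \<le> K * prod_list (map l1norm as) * l1norm (W y)" by (rule cboundD[OF K(1) v W[OF y]])
    also have "\<dots> \<le> K * prod_list (map l1norm as) * (Kw * l1norm y)"
      by (intro mult_left_mono Wb[OF y] mult_nonneg_nonneg K(2) prod_l1norm_nonneg)
    finally show "norm (pullback N W \<psi> as y) \<le> K * Kw * prod_list (map l1norm as) * l1norm y"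
      by (simp add: mult_ac)
  qed
  show ?thesis
  proof (rule cochainI[OF _ _ _ bnd])
    fix as :: "'g vec list" assume v: "valid n as"
    show "pullback N W \<psi> as \<in> dualset (carr N)"
    proof (rule dualI[where K="K * Kw * prod_list (map l1norm as)"])
      fix x y :: "'g vec" and c assume x: "x \<in> carr N" and y: "y \<in> carr N"
      show "pullback N W \<psi> as (vlin c x y) = c * pullback N W \<psi> as x + pullback N W \<psi> as y"
        unfolding pullback_def using x y Nlin Wlin dual_linear[OF cochain_dual[OF p v] W[OF x] W[OF y]] by simp
    qed (use cboundD[OF bnd v] in \<open>auto simp: pullback_def\<close>)
  qed (auto simp: pullback_def fun_eq_iff cochain_invalid[OF p] cochain_multilinear[OF p])
qed

lemma pullback_cobound:
  fixes M N :: "('g::group_add) bimod" and \<psi> :: "'g cochain"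
  assumes W: "\<And>y. y \<in> carr N \<Longrightarrow> W y \<in> carr M"
    and lN: "\<And>a y. a \<in> l1 \<Longrightarrow> y \<in> carr N \<Longrightarrow> lact N a y \<in> carr N \<and> W (lact N a y) = lact M a (W y)"
    and rN: "\<And>a y. a \<in> l1 \<Longrightarrow> y \<in> carr N \<Longrightarrow> ract N y a \<in> carr N \<and> W (ract N y a) = ract M (W y) a"
  shows "cobound N n (pullback N W \<psi>) = pullback N W (cobound M n \<psi>)"
proof (intro ext)
  fix as :: "'g vec list" and y :: "'g vec"
  show "cobound N n (pullback N W \<psi>) as y = pullback N W (cobound M n \<psi>) as y"
  proof (cases "valid (Suc n) as \<and> y \<in> carr N")
    case False thus ?thesis unfolding cobound_def pullback_def dlact_def dract_def by auto
  next
    case True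
    hence v: "valid (Suc n) as" and y: "y \<in> carr N" by auto
    have "hd as \<in> l1" "last as \<in> l1" using valid_hd[OF v] valid_last[OF v] by auto
    thus ?thesis unfolding cobound_def pullback_def dlact_def dract_def
      using v y W[OF y] rN[of "hd as" y] lN[of "last as" y] by simp
  qed
qed

locale bimod_isomorphism = banach_bimod M for M :: "('g::group_add) bimod" +
  fixes N :: "'g bimod" and U :: "'g vec \<Rightarrow> 'g vec" and K1 K2 :: real
  assumes bij: "bij_betw U (carr M) (carr N)"
    and U_lin: "x \<in> carr M \<Longrightarrow> y \<in> carr M \<Longrightarrow> U (vlin c x y) = vlin c (U x) (U y)"
    and U_bound: "x \<in> carr M \<Longrightarrow> l1norm (U x) \<le> K1 * l1norm x"
    and U_bound_inv: "x \<in> carr M \<Longrightarrow> l1norm x \<le> K2 * l1norm (U x)"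
    and U_lact: "a \<in> l1 \<Longrightarrow> x \<in> carr M \<Longrightarrow> U (lact M a x) = lact N a (U x)"
    and U_ract: "a \<in> l1 \<Longrightarrow> x \<in> carr M \<Longrightarrow> U (ract M x a) = ract N (U x) a"
begin

definition V :: "'g vec \<Rightarrow> 'g vec" where
  "V = the_inv_into (carr M) U"

lemma U_carr: "x \<in> carr M \<Longrightarrow> U x \<in> carr N"
  using bij by (auto dest: bij_betwE)
lemma V_carr: "y \<in> carr N \<Longrightarrow> V y \<in> carr M"
  unfolding V_def using bij by (simp add: bij_betw_def the_inv_into_into)
lemma V_U: "x \<in> carr M \<Longrightarrow> V (U x) = x"
  unfolding V_def using bij by (simp add: bij_betw_def the_inv_into_f_f)
lemma U_V: "y \<in> carr N \<Longrightarrow> U (V y) = y"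
  unfolding V_def using bij by (simp add: bij_betw_def f_the_inv_into_f)

text \<open>Everything in N is the image of something in M, which transfers the structure.\<close>
lemma N_vlin: "x \<in> carr N \<Longrightarrow> y \<in> carr N \<Longrightarrow> vlin c x y = U (vlin c (V x) (V y))"
  by (simp add: U_lin V_carr U_V)
lemma N_vlin_closed: "x \<in> carr N \<Longrightarrow> y \<in> carr N \<Longrightarrow> vlin c x y \<in> carr N"
  by (simp add: N_vlin U_carr vlin_closed V_carr)
lemma V_lin: "x \<in> carr N \<Longrightarrow> y \<in> carr N \<Longrightarrow> V (vlin c x y) = vlin c (V x) (V y)"
  by (simp add: N_vlin V_U vlin_closed V_carr)
lemma V_bound: "y \<in> carr N \<Longrightarrow> l1norm (V y) \<le> K2 * l1norm y"
  using U_bound_inv[OF V_carr] by (simp add: U_V)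
lemma V_lact:
  assumes a: "a \<in> l1" and y: "y \<in> carr N"
  shows "lact N a y \<in> carr N \<and> V (lact N a y) = lact M a (V y)"
proof -
  have e: "lact N a y = U (lact M a (V y))" using U_lact[OF a V_carr[OF y]] U_V[OF y] by simp
  show ?thesis unfolding e using U_carr V_U lact_closed[OF a V_carr[OF y]] by simp
qed

lemma V_ract:
  assumes a: "a \<in> l1" and y: "y \<in> carr N"
  shows "ract N y a \<in> carr N \<and> V (ract N y a) = ract M (V y) a"
proof -
  have e: "ract N y a = U (ract M (V y) a)" using U_ract[OF a V_carr[OF y]] U_V[OF y] by simp
  show ?thesis unfolding e using U_carr V_U ract_closed[OF a V_carr[OF y]] by simp
qed

text \<open>Pulling back along V is a chain isomorphism with inverse the pullback along U.\<close>
sublocale pullback_iso: cochain_iso M N "\<lambda>n. pullback N V"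
proof
  fix n
  have Vc: "pullback N V \<psi> \<in> cochains N n" if "\<psi> \<in> cochains M n" for \<psi>
    using that by (intro pullback_cochain[where Kw=K2]) (auto simp: V_carr V_lin N_vlin_closed V_bound)
  have Uc: "pullback M U \<phi> \<in> cochains M n" if "\<phi> \<in> cochains N n" for \<phi>
    using that by (intro pullback_cochain[where Kw=K1]) (auto simp: U_carr U_lin vlin_closed U_bound)
  show "bij_betw (pullback N V) (cochains M n) (cochains N n)"
  proof (rule bij_betwI[where g="pullback M U"])
    fix \<psi> assume "\<psi> \<in> cochains M n"
    thus "pullback M U (pullback N V \<psi>) = \<psi>"
      unfolding pullback_def using cochain_zero_off by (fastforce simp: U_carr V_U)
  next
    fix \<phi> assume "\<phi> \<in> cochains N n"
    thus "pullback N V (pullback M U \<phi>) = \<phi>"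
      unfolding pullback_def using cochain_zero_off by (fastforce simp: V_carr U_V)
  qed (auto intro: Vc Uc)
next
  fix n \<psi> \<xi> c
  show "pullback N V (clin c \<psi> \<xi>) = clin c (pullback N V \<psi>) (pullback N V \<xi>)"
    unfolding pullback_def clin_def by (simp add: fun_eq_iff)
next
  fix n \<psi>
  show "cobound N n (pullback N V \<psi>) = pullback N V (cobound M n \<psi>)"
    by (rule pullback_cobound) (auto simp: V_carr V_lact V_ract)
next
  fix n \<psi> assume "\<psi> \<in> cochains M n"
  thus "cobound M n \<psi> \<in> cochains M (Suc n)" by (rule cobound_cochain)
qed

lemma isomorphic_cohomology: "cohom_iso M N n"
  by (rule pullback_iso.cohom_iso)

end

theorem cohom_iso_of_bimod_iso:
  assumes "banach_bimod M" and "bimod_iso M N"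
  shows "cohom_iso M N n"
proof -
  obtain U K1 K2 where "bimod_isomorphism M N U K1 K2"
    using assms unfolding bimod_iso_def bimod_isomorphism_def bimod_isomorphism_axioms_def by blast
  thus ?thesis by (rule bimod_isomorphism.isomorphic_cohomology)
qed

section \<open>I_0(G)^tw is isomorphic to l1(G - {e})\<close>

text \<open>Deleting the coefficient at the unit; on I_0(G) it is recovered as minus the
  augmentation of the rest, so this is a bijection I_0(G) -> l1(G - {e}).\<close>
definition drop_unit :: "('g::group_add) vec \<Rightarrow> 'g vec" where
  "drop_unit x = x(0 := 0)"

definition restore_unit :: "('g::group_add) vec \<Rightarrow> 'g vec" where
  "restore_unit f = f(0 := - aug f)"

lemma drop_unit_l1: "x \<in> l1 \<Longrightarrow> drop_unit x \<in> l1"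
proof -
  assume "x \<in> l1"
  moreover have "drop_unit x = vlin (- x 0) (pt 0) x" unfolding drop_unit_def vlin_def pt_def by auto
  ultimately show ?thesis by (simp add: vlin_l1 pt_l1)
qed

lemma drop_unit_l1S: "x \<in> I0 \<Longrightarrow> drop_unit x \<in> l1S_set"
  unfolding l1S_set_def by (simp add: drop_unit_l1 I0_l1) (simp add: drop_unit_def)

lemma aug_drop_unit: "x \<in> l1 \<Longrightarrow> aug x = x 0 + aug (drop_unit x)"
proof -
  assume x: "x \<in> l1"
  have "x = vlin (x 0) (pt 0) (drop_unit x)" unfolding drop_unit_def vlin_def pt_def by auto
  hence "aug x = aug (vlin (x 0) (pt 0) (drop_unit x))" by simp
  thus ?thesis by (simp add: aug_vlin pt_l1 drop_unit_l1[OF x] aug_pt)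
qed

lemma restore_unit_vlin_pt: "f 0 = 0 \<Longrightarrow> restore_unit f = vlin (- aug f) (pt 0) f"
  unfolding restore_unit_def vlin_def pt_def by auto

lemma restore_unit_I0: "f \<in> l1S_set \<Longrightarrow> restore_unit f \<in> I0"
  unfolding l1S_set_def
  by (intro I0I) (auto simp: restore_unit_vlin_pt vlin_l1 pt_l1 aug_vlin aug_pt)

lemma restore_drop_unit: "x \<in> I0 \<Longrightarrow> restore_unit (drop_unit x) = x"
proof -
  assume x: "x \<in> I0"
  have "x 0 = - aug (drop_unit x)"
    using aug_drop_unit[OF I0_l1[OF x]] I0_aug[OF x] by (simp add: eq_neg_iff_add_eq_0 add.commute)
  thus ?thesis unfolding restore_unit_def drop_unit_def by auto
qed

lemma drop_restore_unit: "f \<in> l1S_set \<Longrightarrow> drop_unit (restore_unit f) = f"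
  unfolding l1S_set_def drop_unit_def restore_unit_def by auto

lemma drop_unit_norm: "x \<in> l1 \<Longrightarrow> l1norm (drop_unit x) \<le> l1norm x"
  unfolding l1norm_def using drop_unit_l1[of x] unfolding l1_def
  by (intro infsum_mono) (auto simp: drop_unit_def)

lemma restore_unit_norm:
  fixes f :: "('g::group_add) vec"
  assumes "f \<in> l1S_set"
  shows "l1norm (restore_unit f) \<le> 2 * l1norm f"
proof -
  note assms
  hence f: "f \<in> l1" "f 0 = 0" unfolding l1S_set_def by auto
  have "l1norm (restore_unit f) \<le> norm (- aug f) * l1norm (pt (0::'g)) + l1norm f"
    unfolding restore_unit_vlin_pt[of f, OF f(2)] by (intro l1norm_vlin pt_l1 f(1))
  also have "\<dots> \<le> 2 * l1norm f" using norm_aug[OF f(1)] by (simp add: l1norm_pt)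
  finally show ?thesis .
qed

lemma conj_eq_unit: "(- g + h + g = (0::'g::group_add)) \<longleftrightarrow> h = 0"
  by (metis add.assoc add.left_inverse add_minus_cancel add_0_right minus_add_cancel)

text \<open>Conjugation fixes the unit, so deleting the unit coefficient intertwines the actions.\<close>
lemma drop_unit_twl: "drop_unit (twl a x) = twl a (drop_unit x)"
  unfolding drop_unit_def twl_def fun_eq_iff by (auto simp: conj_eq_unit)

lemma drop_unit_twr: "drop_unit (twr x a) = twr (drop_unit x) a"
  unfolding drop_unit_def twr_def by auto

theorem I0tw_iso_l1S: "bimod_iso (I0tw :: ('g::group_add) bimod) l1Smod"
  unfolding bimod_iso_def I0tw_def l1Smod_def bimod.simps
proof (intro exI[of _ drop_unit] conjI ballI allI)
  show "bij_betw drop_unit (I0::'g vec set) l1S_set"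
    by (rule bij_betwI[where g=restore_unit])
       (auto simp: drop_unit_l1S restore_unit_I0 restore_drop_unit drop_restore_unit)
  show "\<exists>K. \<forall>x\<in>(I0::'g vec set). l1norm (drop_unit x) \<le> K * l1norm x"
    by (intro exI[of _ 1]) (simp add: drop_unit_norm I0_l1)
  show "\<exists>K. \<forall>x\<in>(I0::'g vec set). l1norm x \<le> K * l1norm (drop_unit x)"
    by (intro exI[of _ 2]) (metis restore_unit_norm drop_unit_l1S restore_drop_unit)
qed (auto simp: drop_unit_def vlin_def drop_unit_twl[unfolded drop_unit_def] drop_unit_twr[unfolded drop_unit_def])

lemma Theta_bij_I0tw: "bij_betw (Theta n) (cochains I0mod n) (cochains I0tw n)"
  unfolding cochains_I0tw by (rule Theta_bij)

lemma Theta_bounded: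
  "\<psi> \<in> cochains I0mod n \<Longrightarrow> cbound I0mod n \<psi> B \<Longrightarrow> cbound I0tw n (Theta n \<psi>) B"
  using Theta_cochain[of \<psi> n B] by (simp add: cbound_I0tw)

lemma Theta_bounded_inv:
  assumes p: "\<psi> \<in> cochains I0mod n" and b: "cbound I0tw n (Theta n \<psi>) B"
  shows "cbound I0mod n \<psi> B"
  using Theta_inv_cochain[OF Theta_mem[OF p]] b Theta_inv_Theta[OF p] by (simp add: cbound_I0tw)

lemma Theta_point_masses:
  fixes \<psi> :: "('g::group_add) cochain"
  assumes p: "\<psi> \<in> cochains I0mod n" and l: "length gs = n"
  shows "Theta n \<psi> (map pt gs) = dlact I0mod (pt (- sum_list gs)) (\<psi> (map pt gs))"
proof
  fix x :: "'g vec"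
  show "Theta n \<psi> (map pt gs) x = dlact I0mod (pt (- sum_list gs)) (\<psi> (map pt gs)) x"
    using Theta_pt[OF l] cochain_zero_off[OF Theta_mem[OF p]]
    by (cases "x \<in> I0") (auto simp: dlact_def carr_I0mod I0mod_def conv_pt_right)
qed

interpretation Theta_iso: cochain_iso I0mod I0tw Theta
  by unfold_locales (auto simp: Theta_bij_I0tw Theta_linear Theta_chain I0mod.cobound_cochain)

theorem mainTheorem4:
  shows "(\<exists>\<Theta> :: nat \<Rightarrow> ('g::group_add) cochain \<Rightarrow> 'g cochain. \<forall>n.
            bij_betw (\<Theta> n) (cochains I0mod n) (cochains I0tw n) \<and>
            (\<forall>\<psi>\<in>cochains I0mod n. \<forall>\<xi>\<in>cochains I0mod n. \<forall>c.
                \<Theta> n (clin c \<psi> \<xi>) = clin c (\<Theta> n \<psi>) (\<Theta> n \<xi>)) \<and>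
            (\<exists>K. \<forall>\<psi>\<in>cochains I0mod n. \<forall>B.
                cbound I0mod n \<psi> B \<longrightarrow> cbound I0tw n (\<Theta> n \<psi>) (K * B)) \<and>
            (\<exists>K. \<forall>\<psi>\<in>cochains I0mod n. \<forall>B.
                cbound I0tw n (\<Theta> n \<psi>) B \<longrightarrow> cbound I0mod n \<psi> (K * B)) \<and>
            (\<forall>\<psi>\<in>cochains I0mod n. \<forall>gs. length gs = n \<longrightarrow>
                \<Theta> n \<psi> (map pt gs) = dlact I0mod (pt (- sum_list gs)) (\<psi> (map pt gs))) \<and>
            (\<forall>\<psi>\<in>cochains I0mod n.
                cobound I0tw n (\<Theta> n \<psi>) = \<Theta> (Suc n) (cobound I0mod n \<psi>)))
       \<and> (\<forall>n. cohom_iso (I0mod :: 'g bimod) I0tw n)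
       \<and> bimod_iso (I0tw :: 'g bimod) l1Smod
       \<and> (\<forall>n. cohom_iso (I0mod :: 'g bimod) l1Smod n)"
proof (intro conjI allI exI[of _ Theta] ballI impI exI[of _ 1])
  fix n
  have tw_l1S: "cohom_iso (I0tw :: 'g bimod) l1Smod n"
    by (rule cohom_iso_of_bimod_iso[OF I0tw.banach_bimod_axioms I0tw_iso_l1S])
  show "cohom_iso (I0mod :: 'g bimod) l1Smod n"
    by (rule cohom_iso_trans[OF Theta_iso.cohom_iso tw_l1S])
qed (auto simp: Theta_bij_I0tw Theta_linear Theta_bounded Theta_bounded_inv Theta_point_masses
                Theta_chain Theta_iso.cohom_iso I0tw_iso_l1S)

end
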